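(* Let $\mathcal{X}$ be a measurable space, let $k:\mathcal{X}\times\mathcal{X}\to\mathbb{R}$ be a measurable reproducing kernel with $|k(x,y)|\le 1$ for all $x,y$, let $\{\mathbb{P}_\theta:\theta\in\Theta\}$ be a family of Borel probability measures on $\mathcal{X}$, and let $\mathbb{P}^*_0$ be a Borel probability measure on $\mathcal{X}$ such that $\inf_{\theta\in\Theta}\mathrm{MMD}(\mathbb{P}_\theta,\mathbb{P}^*_0)=C$ for some $C>0$. Fix $\alpha>0$, an integer $T\ge1$ and a Borel probability measure $\mathbb{F}$ on $\mathcal{X}$. For each $n$, let $x_1,\dots,x_n$ be i.i.d. with law $\mathbb{P}^*_0$ and let $\nu_n$ be the approximate posterior defined in the context. Then for any sequence of positive reals $M_n\to+\infty$, \[ \nu_n\Big(\mathbb{P}:\ \mathrm{MMD}(\mathbb{P}_{\theta^*(\mathbb{P})},\mathbb{P}^*_0)>C+\frac{M_n}{n^{1/2}}\Big)\longrightarrow 0\quad (n\to\infty), \] where the convergence is in $L^1$, i.e. the expectation of the left-hand side with respect to $x_{1:n}\overset{\text{iid}}{\sim}\mathbb{P}^*_0$ tends to $0$.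
   Context: For a Borel probability measure $\mathbb{P}$ on $\mathcal{X}$, $\mu_{\mathbb{P}}=\int k(x,\cdot)\,\mathbb{P}(dx)$ in the RKHS $\mathcal{H}_k$ of $k$, and $\mathrm{MMD}(\mathbb{P},\mathbb{Q})=\|\mu_{\mathbb{P}}-\mu_{\mathbb{Q}}\|_{\mathcal{H}_k}$. $\theta^*(\mathbb{P})$ denotes a minimiser in $\arg\inf_{\theta\in\Theta}\mathrm{MMD}^2(\mathbb{P},\mathbb{P}_\theta)$ (assumed to exist and chosen measurably). Given data $x_{1:n}$, $\nu_n$ is the law of the random measure $\mathbb{P}=\sum_{i=1}^n w_i\delta_{x_i}+\sum_{k=1}^T\tilde w_k\delta_{\tilde x_k}$ with $\tilde x_{1:T}$ i.i.d. $\mathbb{F}$, independent of $(w_1,\dots,w_n,\tilde w_1,\dots,\tilde w_T)\sim\mathrm{Dirichlet}(1,\dots,1,\tfrac{\alpha}{T},\dots,\tfrac{\alpha}{T})$ ($n$ ones, $T$ copies of $\alpha/T$). Note that $\nu_n$ depends on the random data, so the left-hand side is a random variable. *)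

theory Defs
  imports "HOL-Probability.Probability"
begin

definition reproducing_kernel :: "'a measure \<Rightarrow> ('a \<Rightarrow> 'a \<Rightarrow> real) \<Rightarrow> bool" where
  "reproducing_kernel X k \<longleftrightarrow>
     (\<forall>x\<in>space X. \<forall>y\<in>space X. k x y = k y x) \<and>
     (\<forall>(m::nat) (xs::nat \<Rightarrow> 'a) (c::nat \<Rightarrow> real). (\<forall>i<m. xs i \<in> space X) \<longrightarrow>
        0 \<le> (\<Sum>i<m. \<Sum>j<m. c i * c j * k (xs i) (xs j)))"

(* <mu_P, mu_Q>_{H_k} = \<integral>\<integral> k(x,y) dQ(y) dP(x) *)
definition kernel_inner :: "('a \<Rightarrow> 'a \<Rightarrow> real) \<Rightarrow> 'a measure \<Rightarrow> 'a measure \<Rightarrow> real" where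
  "kernel_inner k P Q = (\<integral>x. (\<integral>y. k x y \<partial>Q) \<partial>P)"

(* MMD^2(P,Q) = || mu_P - mu_Q ||^2_{H_k}, expanded by the reproducing property *)
definition MMD2 :: "('a \<Rightarrow> 'a \<Rightarrow> real) \<Rightarrow> 'a measure \<Rightarrow> 'a measure \<Rightarrow> real" where
  "MMD2 k P Q = kernel_inner k P P - 2 * kernel_inner k P Q + kernel_inner k Q Q"

definition MMD :: "('a \<Rightarrow> 'a \<Rightarrow> real) \<Rightarrow> 'a measure \<Rightarrow> 'a measure \<Rightarrow> real" where
  "MMD k P Q = sqrt (MMD2 k P Q)"

definition gamma_density :: "real \<Rightarrow> real \<Rightarrow> ennreal" where
  "gamma_density a x = (if 0 < x then ennreal (x powr (a - 1) * exp (- x) / Gamma a) else 0)"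

definition dirichlet :: "nat \<Rightarrow> (nat \<Rightarrow> real) \<Rightarrow> (nat \<Rightarrow> real) measure" where
  "dirichlet m a =
     distr (PiM {..<m} (\<lambda>i. density lborel (gamma_density (a i))))
           (PiM {..<m} (\<lambda>_. borel))
           (\<lambda>g. \<lambda>i\<in>{..<m}. g i / (\<Sum>j<m. g j))"

definition post_weights_param :: "nat \<Rightarrow> nat \<Rightarrow> real \<Rightarrow> nat \<Rightarrow> real" where
  "post_weights_param n T \<alpha> i = (if i < n then 1 else \<alpha> / real T)"

definition random_measure :: "'a measure \<Rightarrow> nat \<Rightarrow> nat \<Rightarrow> (nat \<Rightarrow> 'a) \<Rightarrow> (nat \<Rightarrow> real) \<times> (nat \<Rightarrow> 'a) \<Rightarrow> 'a measure" where
  "random_measure X n T x wxt =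
     measure_of (space X) (sets X)
       (\<lambda>A. (\<Sum>i<n. ennreal (fst wxt i) * indicator A (x i))
          + (\<Sum>k<T. ennreal (fst wxt (n + k)) * indicator A (snd wxt k)))"

definition approx_posterior :: "'a measure \<Rightarrow> 'a measure \<Rightarrow> real \<Rightarrow> nat \<Rightarrow> nat \<Rightarrow> (nat \<Rightarrow> 'a) \<Rightarrow> 'a measure measure" where
  "approx_posterior X F \<alpha> T n x =
     distr (dirichlet (n + T) (post_weights_param n T \<alpha>) \<Otimes>\<^sub>M PiM {..<T} (\<lambda>_. F))
           (subprob_algebra X) (random_measure X n T x)"

end

theory Submission
  imports Defs
begin

(* By the triangle inequality for MMD and the minimality of thetastar P,
   MMD(P_thetastar(P), P0) <= C + 2 MMD(P, P0), so the event in question forces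
   MMD^2(P, P0) > M_n^2 / (4n). For the random measure P = sum_a w_a delta_(y_a),
   MMD^2(P, P0) is the quadratic form sum_(a,b) w_a w_b k0(y_a, y_b) in the kernel k0 centred
   at P0. Averaged over the i.i.d. data, every term pairing a data point with a different atom
   vanishes, leaving at most 4 sum_i w_i^2 + 4 (sum_k w~_k)^2; writing the Dirichlet weights as
   normalised Gamma variables, this has expectation at most (72 + 8 alpha) / n. Markov's
   inequality then bounds the expected posterior mass by 4 (72 + 8 alpha) / M_n^2, which tends
   to 0. The triangle inequality rests on positive semi-definiteness of the kernel on measures,
   obtained by averaging that of k over m independent samples of each measure and letting m grow. *)

lemma distr_PiM_components_pair:
  assumes M: "\<And>i. i \<in> I \<Longrightarrow> prob_space (M i)" and ab: "a \<in> I" "b \<in> I" "a \<noteq> b"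
  shows "distr (PiM I M) (M a \<Otimes>\<^sub>M M b) (\<lambda>\<omega>. (\<omega> a, \<omega> b)) = M a \<Otimes>\<^sub>M M b"
proof (rule pair_measure_eqI[symmetric])
  interpret A: prob_space "M a" using M ab by auto
  interpret B: prob_space "M b" using M ab by auto
  show "sigma_finite_measure (M a)" "sigma_finite_measure (M b)"
    by unfold_locales
  show "sets (M a \<Otimes>\<^sub>M M b) = sets (distr (PiM I M) (M a \<Otimes>\<^sub>M M b) (\<lambda>\<omega>. (\<omega> a, \<omega> b)))"
    by simp
  fix A B assume A: "A \<in> sets (M a)" and B: "B \<in> sets (M b)"
  have "(\<lambda>\<omega>. (\<omega> a, \<omega> b)) -` (A \<times> B) \<inter> space (PiM I M) =
      prod_emb I M {a, b} (Pi\<^sub>E {a, b} (\<lambda>i. if i = a then A else B))"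
    using ab by (auto simp: prod_emb_def space_PiM PiE_iff)
  then have "emeasure (distr (PiM I M) (M a \<Otimes>\<^sub>M M b) (\<lambda>\<omega>. (\<omega> a, \<omega> b))) (A \<times> B)
      = emeasure (PiM I M) (prod_emb I M {a, b} (Pi\<^sub>E {a, b} (\<lambda>i. if i = a then A else B)))"
    using A B ab by (subst emeasure_distr) auto
  also have "\<dots> = (\<Prod>i\<in>{a,b}. emeasure (M i) (if i = a then A else B))"
    using A B ab M by (intro emeasure_PiM_emb) auto
  finally show "emeasure (M a) A * emeasure (M b) B =
      emeasure (distr (PiM I M) (M a \<Otimes>\<^sub>M M b) (\<lambda>\<omega>. (\<omega> a, \<omega> b))) (A \<times> B)"
    using ab by simp
qed

lemma integral_PiM_components_pair:
  fixes f :: "'a \<Rightarrow> 'a \<Rightarrow> real"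
  assumes M: "\<And>i. i \<in> I \<Longrightarrow> prob_space (M i)" and ab: "a \<in> I" "b \<in> I" "a \<noteq> b"
    and f: "(\<lambda>(u, v). f u v) \<in> borel_measurable (M a \<Otimes>\<^sub>M M b)"
    and bounded: "\<And>u v. u \<in> space (M a) \<Longrightarrow> v \<in> space (M b) \<Longrightarrow> \<bar>f u v\<bar> \<le> B"
  shows "(\<integral>\<omega>. f (\<omega> a) (\<omega> b) \<partial>PiM I M) = (\<integral>u. (\<integral>v. f u v \<partial>M b) \<partial>M a)"
proof -
  interpret A: prob_space "M a" using M ab by auto
  interpret B: prob_space "M b" using M ab by auto
  interpret AB: pair_prob_space "M a" "M b" by unfold_locales
  have "(\<integral>\<omega>. f (\<omega> a) (\<omega> b) \<partial>PiM I M)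
      = (\<integral>z. (\<lambda>(u, v). f u v) z \<partial>distr (PiM I M) (M a \<Otimes>\<^sub>M M b) (\<lambda>\<omega>. (\<omega> a, \<omega> b)))"
    using ab f by (subst integral_distr) auto
  also have "\<dots> = (\<integral>z. (\<lambda>(u, v). f u v) z \<partial>(M a \<Otimes>\<^sub>M M b))"
    using distr_PiM_components_pair[of I M a b, OF M ab] by simp
  also have "\<dots> = (\<integral>u. (\<integral>v. f u v \<partial>M b) \<partial>M a)"
    using f bounded
    by (intro AB.integral_fst[symmetric] AB.P.integrable_const_bound[where B=B])
       (auto simp: space_pair_measure)
  finally show ?thesis .
qed

lemma integral_PiM_component:
  fixes f :: "'a \<Rightarrow> real"
  assumes M: "\<And>i. i \<in> I \<Longrightarrow> prob_space (M i)" and i: "i \<in> I"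
    and f: "f \<in> borel_measurable (M i)"
  shows "(\<integral>\<omega>. f (\<omega> i) \<partial>PiM I M) = (\<integral>u. f u \<partial>M i)"
proof -
  have "(\<integral>\<omega>. f (\<omega> i) \<partial>PiM I M) = (\<integral>u. f u \<partial>distr (PiM I M) (M i) (\<lambda>\<omega>. \<omega> i))"
    using i f by (subst integral_distr) auto
  then show ?thesis by (simp add: distr_PiM_component[of I M i, OF M i])
qed

lemma nn_integral_PiM_component:
  assumes M: "\<And>i. i \<in> I \<Longrightarrow> prob_space (M i)" and i: "i \<in> I"
    and f: "f \<in> borel_measurable (M i)"
  shows "(\<integral>\<^sup>+ \<omega>. f (\<omega> i) \<partial>PiM I M) = (\<integral>\<^sup>+ u. f u \<partial>M i)"
proof -
  have "(\<integral>\<^sup>+ \<omega>. f (\<omega> i) \<partial>PiM I M) = (\<integral>\<^sup>+ u. f u \<partial>distr (PiM I M) (M i) (\<lambda>\<omega>. \<omega> i))"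
    using i f by (subst nn_integral_distr) auto
  then show ?thesis by (simp add: distr_PiM_component[of I M i, OF M i])
qed

lemma (in prob_space) abs_integral_le_const:
  fixes f :: "'a \<Rightarrow> real"
  assumes bounded: "\<And>x. x \<in> space M \<Longrightarrow> \<bar>f x\<bar> \<le> B"
  shows "\<bar>\<integral>x. f x \<partial>M\<bar> \<le> B"
proof (cases "integrable M f")
  case True
  have "\<bar>\<integral>x. f x \<partial>M\<bar> \<le> (\<integral>x. \<bar>f x\<bar> \<partial>M)"
    using integral_norm_bound[of M f] by simp
  also have "\<dots> \<le> (\<integral>x. B \<partial>M)"
    using True bounded by (intro integral_mono) auto
  finally show ?thesis by (simp add: prob_space)
next
  case False
  obtain x where "x \<in> space M" using not_empty by blast
  then show ?thesis using bounded[of x] False by (simp add: not_integrable_integral_eq)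
qed

lemma emeasure_distr_le_preimage: "emeasure (distr M N f) A \<le> emeasure M (f -` A \<inter> space M)"
  unfolding distr_def emeasure_measure_of_conv by auto

lemma square_le_mult_if_nonneg_quadratic_form:
  fixes a b h :: real
  assumes q: "\<And>s t. 0 \<le> s * s * a + 2 * s * t * h + t * t * b"
  shows "h * h \<le> a * b"
proof (cases "a = 0")
  case True
  have "h = 0"
  proof (rule ccontr)
    assume "h \<noteq> 0"
    have "0 \<le> (- (b + 1) / (2 * h)) * (- (b + 1) / (2 * h)) * a + 2 * (- (b + 1) / (2 * h)) * 1 * h + 1 * 1 * b"
      by (rule q)
    with True \<open>h \<noteq> 0\<close> show False by (simp add: field_simps)
  qed
  with True show ?thesis by simp
next
  case False
  have "0 \<le> a" using q[of 1 0] by simp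
  with False have "0 < a" by simp
  have "0 \<le> h * h * a + 2 * h * (- a) * h + (- a) * (- a) * b"
    by (rule q)
  then have "0 \<le> a * (a * b - h * h)" by (simp add: algebra_simps)
  with \<open>0 < a\<close> show ?thesis by (simp add: zero_le_mult_iff)
qed

lemma sqrt_add_le_if_nonneg_quadratic_form:
  fixes a b h :: real
  assumes q: "\<And>s t. 0 \<le> s * s * a + 2 * s * t * h + t * t * b"
  shows "sqrt (a + 2 * h + b) \<le> sqrt a + sqrt b"
proof -
  have a: "0 \<le> a" and b: "0 \<le> b" using q[of 1 0] q[of 0 1] by simp_all
  have "\<bar>h\<bar> \<le> sqrt a * sqrt b"
    using real_sqrt_le_mono[OF square_le_mult_if_nonneg_quadratic_form[OF q]]
    by (simp add: real_sqrt_mult)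
  then have "a + 2 * h + b \<le> (sqrt a + sqrt b)\<^sup>2"
    using a b by (simp add: power2_eq_square algebra_simps)
  then show ?thesis
    using a b real_sqrt_le_mono by fastforce
qed

lemma quadratic_form_eq_if_off_diagonal_eq:
  fixes E G :: "'j \<Rightarrow> 'j \<Rightarrow> real"
  assumes L: "finite L" and off_diagonal: "\<And>p q. p \<in> L \<Longrightarrow> q \<in> L \<Longrightarrow> p \<noteq> q \<Longrightarrow> E p q = G p q"
  shows "(\<Sum>p\<in>L. \<Sum>q\<in>L. d p * d q * E p q)
    = (\<Sum>p\<in>L. \<Sum>q\<in>L. d p * d q * G p q) + (\<Sum>p\<in>L. (d p)\<^sup>2 * (E p p - G p p))"
proof -
  have "(\<Sum>p\<in>L. \<Sum>q\<in>L. d p * d q * E p q)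
      = (\<Sum>p\<in>L. \<Sum>q\<in>L. d p * d q * G p q + (if p = q then (d p)\<^sup>2 * (E p p - G p p) else 0))"
    using off_diagonal by (intro sum.cong refl) (auto simp: power2_eq_square algebra_simps)
  then show ?thesis
    using L by (simp add: sum.distrib)
qed

lemma nonneg_if_nonneg_quadratic_nat:
  fixes a b :: real
  assumes q: "\<And>m::nat. 0 \<le> real m * real m * a + real m * b"
  shows "0 \<le> a"
proof (rule ccontr)
  assume "\<not> 0 \<le> a"
  then have "a < 0" by simp
  obtain m :: nat where m: "\<bar>b\<bar> / (- a) < real m"
    using reals_Archimedean2 by blast
  moreover have "0 \<le> \<bar>b\<bar> / (- a)" using \<open>a < 0\<close> by (intro divide_nonneg_pos) auto
  ultimately have "0 < real m" by linarith
  from m \<open>a < 0\<close> have "real m * a + b < 0" by (simp add: field_simps)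
  then have "real m * (real m * a + b) < 0"
    using \<open>0 < real m\<close> by (simp add: mult_pos_neg)
  with q[of m] show False by (simp add: algebra_simps)
qed

lemma exp_half_mult_half_power_le:
  assumes n: "1 \<le> n"
  shows "exp (real n / 2) * (1 / 2) ^ n \<le> 5 / real n"
proof -
  have "exp (1 / 2 :: real) ^ 2 = exp 1"
    by (simp add: power2_eq_square exp_add[symmetric])
  then have "exp (1 / 2 :: real) ^ 2 \<le> (5 / 3) ^ 2"
    using e_less_272 by (simp add: power2_eq_square)
  then have e: "exp (1 / 2 :: real) \<le> 5 / 3"
    by (rule power2_le_imp_le) simp
  have "exp (real n / 2) * (1 / 2) ^ n = (exp (1 / 2) / 2) ^ n"
    using exp_of_nat_mult[of n "1 / 2 :: real"] by (simp add: power_divide)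
  also have "\<dots> \<le> (5 / 6) ^ n"
    using e by (intro power_mono) auto
  also have "\<dots> \<le> 5 / real n"
  proof -
    have "1 + real n * (1 / 5) \<le> (1 + 1 / 5 :: real) ^ n"
      by (rule Bernoulli_inequality) simp
    then have "real n / 5 * (5 / 6) ^ n \<le> (6 / 5) ^ n * (5 / 6 :: real) ^ n"
      by (intro mult_right_mono) auto
    also have "\<dots> = 1"
      by (simp add: power_mult_distrib[symmetric])
    finally show ?thesis using n by (simp add: field_simps)
  qed
  finally show ?thesis .
qed

section \<open>Maximum mean discrepancy of a bounded kernel\<close>

locale bounded_reproducing_kernel =
  fixes X :: "'a measure" and k :: "'a \<Rightarrow> 'a \<Rightarrow> real"
  assumes reproducing: "reproducing_kernel X k"
    and measurable_kernel: "(\<lambda>(x, y). k x y) \<in> borel_measurable (X \<Otimes>\<^sub>M X)"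
    and abs_kernel_le_1: "\<forall>x\<in>space X. \<forall>y\<in>space X. \<bar>k x y\<bar> \<le> 1"
begin

lemma kernel_symmetric: "x \<in> space X \<Longrightarrow> y \<in> space X \<Longrightarrow> k x y = k y x"
  using reproducing by (simp add: reproducing_kernel_def)

lemma measurable_kernel_pair:
  "sets A = sets X \<Longrightarrow> sets B = sets X \<Longrightarrow> (\<lambda>(x, y). k x y) \<in> borel_measurable (A \<Otimes>\<^sub>M B)"
  using measurable_kernel by (subst measurable_cong_sets[OF sets_pair_measure_cong refl]) auto

lemma kernel_psd_finite:
  assumes L: "finite L" and y: "\<And>p. p \<in> L \<Longrightarrow> y p \<in> space X"
  shows "0 \<le> (\<Sum>p\<in>L. \<Sum>q\<in>L. d p * d q * k (y p) (y q))"
proof -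
  obtain h where h: "bij_betw h {..<card L} L"
    using ex_bij_betw_nat_finite[OF L] by (auto simp: atLeast0LessThan)
  then have "\<And>i. i < card L \<Longrightarrow> h i \<in> L" by (auto simp: bij_betw_def)
  then have "0 \<le> (\<Sum>i<card L. \<Sum>j<card L. d (h i) * d (h j) * k (y (h i)) (y (h j)))"
    using reproducing y unfolding reproducing_kernel_def by auto
  also have "\<dots> = (\<Sum>i<card L. \<Sum>q\<in>L. d (h i) * d q * k (y (h i)) (y q))"
    by (intro sum.cong refl sum.reindex_bij_betw[OF h])
  also have "\<dots> = (\<Sum>p\<in>L. \<Sum>q\<in>L. d p * d q * k (y p) (y q))"
    by (rule sum.reindex_bij_betw[OF h])
  finally show ?thesis .
qed

lemma abs_kernel_inner_le_1:
  assumes P: "prob_space P" "sets P = sets X" and Q: "prob_space Q" "sets Q = sets X"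
  shows "\<bar>kernel_inner k P Q\<bar> \<le> 1"
  using abs_kernel_le_1 sets_eq_imp_space_eq[OF P(2)] sets_eq_imp_space_eq[OF Q(2)]
  unfolding kernel_inner_def
  by (intro prob_space.abs_integral_le_const[OF P(1)] prob_space.abs_integral_le_const[OF Q(1)])
     auto

lemma kernel_inner_commute:
  assumes P: "prob_space P" "sets P = sets X" and Q: "prob_space Q" "sets Q = sets X"
  shows "kernel_inner k P Q = kernel_inner k Q P"
proof -
  interpret P: prob_space P by fact
  interpret Q: prob_space Q by fact
  interpret PQ: pair_prob_space P Q by unfold_locales
  have space: "space P = space X" "space Q = space X"
    using sets_eq_imp_space_eq P(2) Q(2) by auto
  have "integrable (P \<Otimes>\<^sub>M Q) (\<lambda>(x, y). k x y)"
    using measurable_kernel_pair[OF P(2) Q(2)] abs_kernel_le_1 space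
    by (intro PQ.P.integrable_const_bound[where B=1]) (auto simp: space_pair_measure)
  then have "kernel_inner k P Q = (\<integral>y. \<integral>x. k x y \<partial>P \<partial>Q)"
    unfolding kernel_inner_def by (rule PQ.Fubini_integral[symmetric])
  also have "\<dots> = kernel_inner k Q P"
    unfolding kernel_inner_def using kernel_symmetric space
    by (intro Bochner_Integration.integral_cong refl) auto
  finally show ?thesis .
qed

lemma kernel_quadratic_form_PiM_le:
  fixes L :: "'j set" and Q :: "'j \<Rightarrow> 'a measure" and d :: "'j \<Rightarrow> real"
  assumes L: "finite L"
    and Q: "\<And>p. p \<in> L \<Longrightarrow> prob_space (Q p)" "\<And>p. p \<in> L \<Longrightarrow> sets (Q p) = sets X"
  shows "0 \<le> (\<Sum>p\<in>L. \<Sum>q\<in>L. d p * d q * kernel_inner k (Q p) (Q q)) + 2 * (\<Sum>p\<in>L. (d p)\<^sup>2)"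
proof -
  define \<Omega> where "\<Omega> = PiM L Q"
  define E where "E p q = (\<integral>\<omega>. k (\<omega> p) (\<omega> q) \<partial>\<Omega>)" for p q
  define G where "G p q = kernel_inner k (Q p) (Q q)" for p q
  interpret \<Omega>: prob_space \<Omega> unfolding \<Omega>_def using Q by (intro prob_space_PiM) auto
  have space_Q: "\<And>p. p \<in> L \<Longrightarrow> space (Q p) = space X"
    using Q(2) sets_eq_imp_space_eq by blast
  have space: "\<And>\<omega> p. \<omega> \<in> space \<Omega> \<Longrightarrow> p \<in> L \<Longrightarrow> \<omega> p \<in> space X"
    using space_Q by (auto simp: \<Omega>_def space_PiM PiE_iff)
  have integrable: "integrable \<Omega> (\<lambda>\<omega>. k (\<omega> p) (\<omega> q))" if "p \<in> L" "q \<in> L" for p q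
  proof (rule \<Omega>.integrable_const_bound[where B=1])
    have "(\<lambda>\<omega>. (\<omega> p, \<omega> q)) \<in> measurable \<Omega> (Q p \<Otimes>\<^sub>M Q q)"
      unfolding \<Omega>_def using that by measurable
    from measurable_compose[OF this measurable_kernel_pair[OF Q(2) Q(2)]]
    show "(\<lambda>\<omega>. k (\<omega> p) (\<omega> q)) \<in> borel_measurable \<Omega>" using that by simp
  qed (use abs_kernel_le_1 space that in auto)
  have E_off_diagonal: "E p q = G p q" if "p \<in> L" "q \<in> L" "p \<noteq> q" for p q
    unfolding E_def G_def kernel_inner_def \<Omega>_def
    using that Q measurable_kernel_pair[OF Q(2) Q(2)] abs_kernel_le_1 space_Q
    by (intro integral_PiM_components_pair[where B=1]) auto
  have E_diagonal: "E p p - G p p \<le> 2" if "p \<in> L" for p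
    using \<Omega>.abs_integral_le_const[of "\<lambda>\<omega>. k (\<omega> p) (\<omega> p)" 1] abs_kernel_inner_le_1[OF Q Q]
      abs_kernel_le_1 space that
    by (force simp: E_def G_def)
  have "0 \<le> (\<integral>\<omega>. (\<Sum>p\<in>L. \<Sum>q\<in>L. d p * d q * k (\<omega> p) (\<omega> q)) \<partial>\<Omega>)"
    using kernel_psd_finite[OF L] space by (intro Bochner_Integration.integral_nonneg) auto
  also have "\<dots> = (\<Sum>p\<in>L. \<Sum>q\<in>L. d p * d q * E p q)"
    using integrable by (simp add: E_def Bochner_Integration.integral_sum integrable_sum)
  also have "\<dots> = (\<Sum>p\<in>L. \<Sum>q\<in>L. d p * d q * G p q) + (\<Sum>p\<in>L. (d p)\<^sup>2 * (E p p - G p p))"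
    using L E_off_diagonal by (rule quadratic_form_eq_if_off_diagonal_eq)
  also have "\<dots> \<le> (\<Sum>p\<in>L. \<Sum>q\<in>L. d p * d q * G p q) + (\<Sum>p\<in>L. (d p)\<^sup>2 * 2)"
    using E_diagonal by (intro add_left_mono sum_mono mult_left_mono) auto
  finally show ?thesis by (simp add: G_def sum_distrib_left mult.commute)
qed

lemma kernel_inner_psd:
  fixes J :: "'j set" and P :: "'j \<Rightarrow> 'a measure" and c :: "'j \<Rightarrow> real"
  assumes J: "finite J"
    and P: "\<And>j. j \<in> J \<Longrightarrow> prob_space (P j)" "\<And>j. j \<in> J \<Longrightarrow> sets (P j) = sets X"
  shows "0 \<le> (\<Sum>i\<in>J. \<Sum>j\<in>J. c i * c j * kernel_inner k (P i) (P j))"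
proof (rule nonneg_if_nonneg_quadratic_nat)
  fix m :: nat
  \<comment> \<open>\<open>m\<close> independent copies of each \<open>P j\<close>: the diagonal of the kernel contributes only
    \<open>O(m)\<close>, while the quadratic form itself scales like \<open>m\<^sup>2\<close>.\<close>
  have copies: "(\<Sum>p\<in>{..<m} \<times> J. f (snd p)) = real m * (\<Sum>j\<in>J. f j)" for f :: "'j \<Rightarrow> real"
    by (simp add: sum.cartesian_product')
  have copies2: "(\<Sum>p\<in>{..<m} \<times> J. \<Sum>q\<in>{..<m} \<times> J. f (snd p) (snd q))
      = real m * real m * (\<Sum>i\<in>J. \<Sum>j\<in>J. f i j)" for f :: "'j \<Rightarrow> 'j \<Rightarrow> real"
    by (simp add: sum.cartesian_product' sum_distrib_left mult.assoc)
  have "0 \<le> (\<Sum>p\<in>{..<m} \<times> J. \<Sum>q\<in>{..<m} \<times> J. c (snd p) * c (snd q) * kernel_inner k (P (snd p)) (P (snd q)))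
      + 2 * (\<Sum>p\<in>{..<m} \<times> J. (c (snd p))\<^sup>2)"
    using J P by (intro kernel_quadratic_form_PiM_le) auto
  then show "0 \<le> real m * real m * (\<Sum>i\<in>J. \<Sum>j\<in>J. c i * c j * kernel_inner k (P i) (P j))
      + real m * (2 * (\<Sum>j\<in>J. (c j)\<^sup>2))"
    unfolding copies copies2[of "\<lambda>i j. c i * c j * kernel_inner k (P i) (P j)"]
      copies[of "\<lambda>j. (c j)\<^sup>2"]
    by (simp add: mult_ac)
qed

lemma MMD2_nonneg:
  assumes P: "prob_space P" "sets P = sets X" and Q: "prob_space Q" "sets Q = sets X"
  shows "0 \<le> MMD2 k P Q"
proof -
  define R where "R i = (if i = 0 then P else Q)" for i :: nat
  define c where "c i = (if i = 0 then 1 else - 1 :: real)" for i :: nat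
  have "0 \<le> (\<Sum>i\<in>{0, 1}. \<Sum>j\<in>{0, 1}. c i * c j * kernel_inner k (R i) (R j))"
    using P Q by (intro kernel_inner_psd) (auto simp: R_def)
  then show ?thesis
    using kernel_inner_commute[OF P Q] by (simp add: R_def c_def MMD2_def)
qed

lemma MMD_triangle:
  assumes A: "prob_space A" "sets A = sets X" and B: "prob_space B" "sets B = sets X"
    and D: "prob_space D" "sets D = sets X"
  shows "MMD k A B \<le> MMD k A D + MMD k D B"
proof -
  define h where "h = kernel_inner k A D - kernel_inner k A B - kernel_inner k D D + kernel_inner k D B"
  have "0 \<le> s * s * MMD2 k A D + 2 * s * t * h + t * t * MMD2 k D B" for s t
  proof -
    \<comment> \<open>the kernel quadratic form at the signed combination \<open>s A + (t - s) D - t B\<close>\<close>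
    define P where "P i = (if i = 0 then A else if i = 1 then D else B)" for i :: nat
    define c where "c i = (if i = 0 then s else if i = 1 then t - s else - t)" for i :: nat
    have "0 \<le> (\<Sum>i\<in>{0, 1, 2}. \<Sum>j\<in>{0, 1, 2}. c i * c j * kernel_inner k (P i) (P j))"
      using A B D by (intro kernel_inner_psd) (auto simp: P_def)
    then show ?thesis
      using kernel_inner_commute[OF A D] kernel_inner_commute[OF A B] kernel_inner_commute[OF D B]
      by (simp add: P_def c_def MMD2_def h_def algebra_simps)
  qed
  moreover have "MMD2 k A B = MMD2 k A D + 2 * h + MMD2 k D B"
    by (simp add: MMD2_def h_def)
  ultimately show ?thesis
    unfolding MMD_def by (metis sqrt_add_le_if_nonneg_quadratic_form)
qed

lemma MMD_commute:
  assumes P: "prob_space P" "sets P = sets X" and Q: "prob_space Q" "sets Q = sets X"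
  shows "MMD k P Q = MMD k Q P"
  using kernel_inner_commute[OF P Q] by (simp add: MMD_def MMD2_def)

lemma MMD_minimiser_le:
  assumes P0: "prob_space P0" "sets P0 = sets X"
    and P\<theta>: "\<forall>\<theta>\<in>\<Theta>. prob_space (P\<theta> \<theta>) \<and> sets (P\<theta> \<theta>) = sets X"
    and P: "prob_space P" "sets P = sets X"
    and \<theta>P: "\<theta>P \<in> \<Theta>" and minimal: "\<forall>\<theta>\<in>\<Theta>. MMD2 k P (P\<theta> \<theta>P) \<le> MMD2 k P (P\<theta> \<theta>)"
  shows "MMD k (P\<theta> \<theta>P) P0 \<le> (INF \<theta>\<in>\<Theta>. MMD k (P\<theta> \<theta>) P0) + 2 * MMD k P P0"
proof -
  have "MMD k (P\<theta> \<theta>P) P0 - 2 * MMD k P P0 \<le> MMD k (P\<theta> \<theta>) P0" if \<theta>: "\<theta> \<in> \<Theta>" for \<theta>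
  proof -
    have P\<theta>P: "prob_space (P\<theta> \<theta>P)" "sets (P\<theta> \<theta>P) = sets X"
      and P\<theta>\<theta>: "prob_space (P\<theta> \<theta>)" "sets (P\<theta> \<theta>) = sets X"
      using P\<theta> \<theta>P \<theta> by auto
    have "MMD k (P\<theta> \<theta>P) P0 \<le> MMD k P (P\<theta> \<theta>P) + MMD k P P0"
      using MMD_triangle[OF P\<theta>P P0 P] MMD_commute[OF P\<theta>P P] by simp
    also have "MMD k P (P\<theta> \<theta>P) \<le> MMD k P (P\<theta> \<theta>)"
      unfolding MMD_def using minimal \<theta> by (simp add: real_sqrt_le_mono)
    also have "\<dots> \<le> MMD k P P0 + MMD k (P\<theta> \<theta>) P0"
      using MMD_triangle[OF P P\<theta>\<theta> P0] MMD_commute[OF P0 P\<theta>\<theta>] by simp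
    finally show ?thesis by simp
  qed
  then have "MMD k (P\<theta> \<theta>P) P0 - 2 * MMD k P P0 \<le> (INF \<theta>\<in>\<Theta>. MMD k (P\<theta> \<theta>) P0)"
    using \<theta>P by (intro cINF_greatest) auto
  then show ?thesis by simp
qed

end

section \<open>Weighted empirical measures\<close>

lemma sum_lessThan_add:
  fixes g :: "nat \<Rightarrow> 'b::comm_monoid_add"
  shows "(\<Sum>a<n + T. g a) = (\<Sum>a<n. g a) + (\<Sum>i<T. g (n + i))"
  by (induct T) (simp_all add: add.assoc)

lemma prod_lessThan_add:
  fixes g :: "nat \<Rightarrow> 'b::comm_monoid_mult"
  shows "(\<Prod>a<n + T. g a) = (\<Prod>a<n. g a) * (\<Prod>i<T. g (n + i))"
  by (induct T) (simp_all add: mult.assoc)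

definition weighted_point_measure :: "'a measure \<Rightarrow> nat \<Rightarrow> (nat \<Rightarrow> real) \<Rightarrow> (nat \<Rightarrow> 'a) \<Rightarrow> 'a measure"
  where "weighted_point_measure X N w y = distr (point_measure {..<N} (\<lambda>a. ennreal (w a))) X y"

definition append_points :: "nat \<Rightarrow> (nat \<Rightarrow> 'a) \<Rightarrow> (nat \<Rightarrow> 'a) \<Rightarrow> nat \<Rightarrow> 'a"
  where "append_points n x x' a = (if a < n then x a else x' (a - n))"

lemma sets_weighted_point_measure [simp]: "sets (weighted_point_measure X N w y) = sets X"
  and space_weighted_point_measure [simp]: "space (weighted_point_measure X N w y) = space X"
  by (simp_all add: weighted_point_measure_def)

lemma measurable_points:
  assumes "\<And>a. a < N \<Longrightarrow> y a \<in> space X"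
  shows "y \<in> measurable (point_measure {..<N} w) X"
  using assms unfolding point_measure_def
  by (subst measurable_cong_sets[OF sets_density refl]) (auto simp: measurable_count_space_eq1)

lemma emeasure_weighted_point_measure:
  assumes y: "\<And>a. a < N \<Longrightarrow> y a \<in> space X" and A: "A \<in> sets X"
  shows "emeasure (weighted_point_measure X N w y) A = (\<Sum>a<N. ennreal (w a) * indicator A (y a))"
proof -
  have "emeasure (weighted_point_measure X N w y) A
      = emeasure (point_measure {..<N} (\<lambda>a. ennreal (w a))) (y -` A \<inter> {..<N})"
    unfolding weighted_point_measure_def using A measurable_points[of N y X, OF y]
    by (subst emeasure_distr) (auto simp: space_point_measure)
  also have "\<dots> = (\<Sum>a\<in>y -` A \<inter> {..<N}. ennreal (w a))"
    by (rule emeasure_point_measure_finite) auto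
  also have "\<dots> = (\<Sum>a<N. ennreal (w a) * indicator A (y a))"
    by (rule sum.mono_neutral_cong_left) (auto simp: indicator_def)
  finally show ?thesis .
qed

lemma random_measure_eq_weighted_point_measure:
  assumes x: "\<And>i. i < n \<Longrightarrow> x i \<in> space X" and x': "\<And>i. i < T \<Longrightarrow> x' i \<in> space X"
  shows "random_measure X n T x (w, x') = weighted_point_measure X (n + T) w (append_points n x x')"
proof -
  let ?R = "weighted_point_measure X (n + T) w (append_points n x x')"
  have "?R = measure_of (space X) (sets X) (emeasure ?R)"
    using measure_of_of_measure[of ?R] by simp
  also have "\<dots> = random_measure X n T x (w, x')"
    unfolding random_measure_def
  proof (rule measure_of_eq)
    show "sets X \<subseteq> Pow (space X)" using sets.space_closed by auto
    fix A assume "A \<in> sigma_sets (space X) (sets X)"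
    then have "A \<in> sets X" by (simp add: sets.sigma_sets_eq)
    then show "emeasure ?R A = (\<Sum>i<n. ennreal (fst (w, x') i) * indicator A (x i))
        + (\<Sum>i<T. ennreal (fst (w, x') (n + i)) * indicator A (snd (w, x') i))"
      using x x' by (simp add: emeasure_weighted_point_measure append_points_def sum_lessThan_add)
  qed
  finally show ?thesis by simp
qed

lemma integral_weighted_point_measure:
  fixes f :: "'a \<Rightarrow> real"
  assumes y: "\<And>a. a < N \<Longrightarrow> y a \<in> space X" and w: "\<And>a. a < N \<Longrightarrow> 0 \<le> w a"
    and f: "f \<in> borel_measurable X"
  shows "(\<integral>u. f u \<partial>weighted_point_measure X N w y) = (\<Sum>a<N. w a * f (y a))"
proof -
  have "(\<integral>u. f u \<partial>weighted_point_measure X N w y)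
      = (\<integral>a. f (y a) \<partial>point_measure {..<N} (\<lambda>a. ennreal (w a)))"
    unfolding weighted_point_measure_def using measurable_points[of N y X, OF y] f by (rule integral_distr)
  also have "\<dots> = (\<integral>a. w a * f (y a) \<partial>count_space {..<N})"
    unfolding point_measure_def using w
    by (subst integral_density) (auto simp: measurable_count_space_eq1 AE_count_space)
  finally show ?thesis by (simp add: lebesgue_integral_count_space_finite)
qed

lemma prob_space_weighted_point_measure:
  assumes y: "\<And>a. a < N \<Longrightarrow> y a \<in> space X" and w: "\<And>a. a < N \<Longrightarrow> 0 \<le> w a"
    and sum_w: "(\<Sum>a<N. w a) = 1"
  shows "prob_space (weighted_point_measure X N w y)"
proof
  have "emeasure (weighted_point_measure X N w y) (space X) = (\<Sum>a<N. ennreal (w a))"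
    using y by (simp add: emeasure_weighted_point_measure)
  also have "\<dots> = 1" using w sum_w by (subst sum_ennreal) auto
  finally show "emeasure (weighted_point_measure X N w y) (space (weighted_point_measure X N w y)) = 1"
    by simp
qed

lemma measurable_append_points:
  assumes x: "\<And>i. i < n \<Longrightarrow> (\<lambda>z. x z i) \<in> measurable M X"
    and x': "\<And>i. i < T \<Longrightarrow> (\<lambda>z. x' z i) \<in> measurable M X" and a: "a < n + T"
  shows "(\<lambda>z. append_points n (x z) (x' z) a) \<in> measurable M X"
  using x[of a] x'[of "a - n"] a by (cases "a < n") (auto simp: append_points_def)

lemma append_points_in_space:
  assumes "\<And>i. i < n \<Longrightarrow> x i \<in> space X" and "\<And>i. i < T \<Longrightarrow> x' i \<in> space X" and "a < n + T"
  shows "append_points n x x' a \<in> space X"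
  using assms by (auto simp: append_points_def)

section \<open>The kernel centred at the data distribution\<close>

definition kernel_mean :: "('a \<Rightarrow> 'a \<Rightarrow> real) \<Rightarrow> 'a measure \<Rightarrow> 'a \<Rightarrow> real"
  where "kernel_mean k P u = (\<integral>v. k u v \<partial>P)"

text \<open>The inner product of \<open>k(u,\<cdot>) - \<mu>\<^sub>P\<close> and \<open>k(v,\<cdot>) - \<mu>\<^sub>P\<close> in the RKHS.\<close>
definition centred_kernel :: "('a \<Rightarrow> 'a \<Rightarrow> real) \<Rightarrow> 'a measure \<Rightarrow> 'a \<Rightarrow> 'a \<Rightarrow> real"
  where "centred_kernel k P u v = k u v - kernel_mean k P u - kernel_mean k P v + kernel_inner k P P"

definition centred_quadratic_form ::
    "('a \<Rightarrow> 'a \<Rightarrow> real) \<Rightarrow> 'a measure \<Rightarrow> nat \<Rightarrow> (nat \<Rightarrow> real) \<Rightarrow> (nat \<Rightarrow> 'a) \<Rightarrow> real"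
  where "centred_quadratic_form k P N w y = (\<Sum>a<N. \<Sum>b<N. w a * w b * centred_kernel k P (y a) (y b))"

definition MMD2_weight_bound :: "nat \<Rightarrow> nat \<Rightarrow> (nat \<Rightarrow> real) \<Rightarrow> real"
  where "MMD2_weight_bound n T w = 4 * (\<Sum>a<n. (w a)\<^sup>2) + 4 * (\<Sum>i<T. w (n + i))\<^sup>2"

lemma MMD2_weight_bound_eq_sum:
  "MMD2_weight_bound n T w = (\<Sum>a<n + T. \<Sum>b<n + T. 4 * (if a = b \<and> a < n then (w a)\<^sup>2 else 0)
      + 4 * (if n \<le> a \<and> n \<le> b then w a * w b else 0))"
proof -
  have "(\<Sum>a<n + T. \<Sum>b<n + T. if a = b \<and> a < n then (w a)\<^sup>2 else 0) = (\<Sum>a<n. (w a)\<^sup>2)"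
    by (simp add: sum.If_cases sum_lessThan_add)
  moreover have "(\<Sum>a<n + T. \<Sum>b<n + T. if n \<le> a \<and> n \<le> b then w a * w b else 0) = (\<Sum>i<T. w (n + i))\<^sup>2"
    by (simp add: sum_lessThan_add if_distrib sum.If_cases power2_eq_square sum_product)
  ultimately show ?thesis
    by (simp add: sum.distrib sum_distrib_left[symmetric] MMD2_weight_bound_def)
qed

locale centred_reproducing_kernel = bounded_reproducing_kernel +
  fixes P0 :: "'a measure"
  assumes prob_space_P0: "prob_space P0" and sets_P0: "sets P0 = sets X"
begin

lemma space_P0: "space P0 = space X"
  using sets_eq_imp_space_eq[OF sets_P0] .

lemma measurable_component_P0: "i \<in> I \<Longrightarrow> (\<lambda>x. x i) \<in> measurable (PiM I (\<lambda>_. P0)) X"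
  using measurable_component_singleton[of i I "\<lambda>_. P0"] by (simp cong: measurable_cong_sets add: sets_P0)

lemma measurable_kernel_mean: "kernel_mean k P0 \<in> borel_measurable X"
proof -
  interpret P0: prob_space P0 by (rule prob_space_P0)
  have "(\<lambda>u. \<integral>v. k u v \<partial>P0) \<in> borel_measurable X"
    using measurable_kernel_pair[OF refl sets_P0] by (rule P0.borel_measurable_lebesgue_integral)
  then show ?thesis by (simp add: kernel_mean_def[abs_def])
qed

lemma abs_kernel_mean_le_1: "u \<in> space X \<Longrightarrow> \<bar>kernel_mean k P0 u\<bar> \<le> 1"
  unfolding kernel_mean_def using abs_kernel_le_1 space_P0
  by (intro prob_space.abs_integral_le_const[OF prob_space_P0]) auto

lemma abs_centred_kernel_le_4:
  "u \<in> space X \<Longrightarrow> v \<in> space X \<Longrightarrow> \<bar>centred_kernel k P0 u v\<bar> \<le> 4"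
  using abs_kernel_le_1 abs_kernel_mean_le_1[of u] abs_kernel_mean_le_1[of v]
    abs_kernel_inner_le_1[OF prob_space_P0 sets_P0 prob_space_P0 sets_P0]
  unfolding centred_kernel_def by fastforce

lemma measurable_centred_kernel_pair:
  assumes A: "sets A = sets X" and B: "sets B = sets X"
  shows "(\<lambda>(u, v). centred_kernel k P0 u v) \<in> borel_measurable (A \<Otimes>\<^sub>M B)"
proof -
  have "(\<lambda>z. kernel_mean k P0 (fst z)) \<in> borel_measurable (A \<Otimes>\<^sub>M B)"
    "(\<lambda>z. kernel_mean k P0 (snd z)) \<in> borel_measurable (A \<Otimes>\<^sub>M B)"
    using measurable_kernel_mean A B by (auto cong: measurable_cong_sets)
  with measurable_kernel_pair[OF A B] show ?thesis
    unfolding centred_kernel_def case_prod_beta' by measurable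
qed

lemma measurable_centred_kernel_compose:
  assumes "f \<in> measurable M X" "g \<in> measurable M X"
  shows "(\<lambda>x. centred_kernel k P0 (f x) (g x)) \<in> borel_measurable M"
  using measurable_compose[OF measurable_Pair[OF assms] measurable_centred_kernel_pair[OF refl refl]]
  by simp

lemma centred_kernel_commute:
  "u \<in> space X \<Longrightarrow> v \<in> space X \<Longrightarrow> centred_kernel k P0 u v = centred_kernel k P0 v u"
  using kernel_symmetric unfolding centred_kernel_def by auto

lemma integral_centred_kernel_right:
  assumes u: "u \<in> space X"
  shows "(\<integral>v. centred_kernel k P0 u v \<partial>P0) = 0"
proof -
  interpret P0: prob_space P0 by (rule prob_space_P0)
  have "integrable P0 (k u)"
    using measurable_Pair2[OF measurable_kernel u] abs_kernel_le_1 u space_P0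
    by (intro P0.integrable_const_bound[where B=1]) (auto cong: measurable_cong_sets simp: sets_P0)
  moreover have "integrable P0 (kernel_mean k P0)"
    using measurable_kernel_mean abs_kernel_mean_le_1 space_P0
    by (intro P0.integrable_const_bound[where B=1]) (auto cong: measurable_cong_sets simp: sets_P0)
  moreover have "kernel_inner k P0 P0 = (\<integral>u. kernel_mean k P0 u \<partial>P0)"
    by (simp add: kernel_inner_def kernel_mean_def)
  ultimately show ?thesis
    by (simp add: centred_kernel_def kernel_mean_def[symmetric] P0.prob_space)
qed

lemma integral_centred_kernel_left:
  assumes v: "v \<in> space X"
  shows "(\<integral>u. centred_kernel k P0 u v \<partial>P0) = 0"
  using v space_P0 centred_kernel_commute integral_centred_kernel_right[OF v]
  by (metis (no_types, lifting) Bochner_Integration.integral_cong)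

lemma MMD2_weighted_point_measure:
  assumes y: "\<And>a. a < N \<Longrightarrow> y a \<in> space X" and w: "\<And>a. a < N \<Longrightarrow> 0 \<le> w a"
    and sum_w: "(\<Sum>a<N. w a) = 1"
  shows "MMD2 k (weighted_point_measure X N w y) P0 = centred_quadratic_form k P0 N w y"
proof -
  let ?R = "weighted_point_measure X N w y" and ?m = "kernel_mean k P0"
  have "kernel_inner k ?R ?R = (\<integral>u. (\<Sum>b<N. w b * k u (y b)) \<partial>?R)"
    unfolding kernel_inner_def using measurable_Pair2[OF measurable_kernel]
    by (intro Bochner_Integration.integral_cong refl integral_weighted_point_measure[OF y w]) auto
  also have "\<dots> = (\<Sum>a<N. w a * (\<Sum>b<N. w b * k (y a) (y b)))"
    using measurable_Pair1[OF measurable_kernel] y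
    by (intro integral_weighted_point_measure[OF y w] borel_measurable_sum) auto
  finally have RR: "kernel_inner k ?R ?R = (\<Sum>a<N. \<Sum>b<N. w a * w b * k (y a) (y b))"
    by (simp add: sum_distrib_left mult.assoc)
  have RP0: "kernel_inner k ?R P0 = (\<Sum>a<N. w a * ?m (y a))"
    using integral_weighted_point_measure[OF y w measurable_kernel_mean]
    by (simp add: kernel_inner_def kernel_mean_def)
  have "(\<Sum>a<N. \<Sum>b<N. w a * w b * centred_kernel k P0 (y a) (y b))
      = (\<Sum>a<N. \<Sum>b<N. w a * w b * k (y a) (y b)) - (\<Sum>a<N. \<Sum>b<N. w a * w b * ?m (y a))
        - (\<Sum>a<N. \<Sum>b<N. w a * w b * ?m (y b)) + (\<Sum>a<N. \<Sum>b<N. w a * w b * kernel_inner k P0 P0)"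
    by (simp add: centred_kernel_def algebra_simps sum.distrib sum_subtractf)
  also have "(\<Sum>a<N. \<Sum>b<N. w a * w b * ?m (y a)) = (\<Sum>a<N. w a * ?m (y a)) * (\<Sum>b<N. w b)"
    by (simp add: sum_distrib_left sum_distrib_right mult_ac)
  also have "(\<Sum>a<N. \<Sum>b<N. w a * w b * ?m (y b)) = (\<Sum>b<N. w b * ?m (y b)) * (\<Sum>a<N. w a)"
    by (subst sum.swap) (simp add: sum_distrib_left sum_distrib_right mult_ac)
  also have "(\<Sum>a<N. \<Sum>b<N. w a * w b * kernel_inner k P0 P0)
      = (\<Sum>a<N. w a) * (\<Sum>b<N. w b) * kernel_inner k P0 P0"
    by (simp add: sum_distrib_left sum_distrib_right mult_ac)
  finally show ?thesis
    using RR RP0 sum_w by (simp add: MMD2_def centred_quadratic_form_def)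
qed

lemma integral_centred_kernel_append_points:
  fixes x' :: "nat \<Rightarrow> 'a"
  assumes x': "\<And>i. i < T \<Longrightarrow> x' i \<in> space X" and a: "a < n + T" and b: "b < n + T"
    and data_point: "a < n \<or> b < n" and "a \<noteq> b"
  shows "(\<integral>x. centred_kernel k P0 (append_points n x x' a) (append_points n x x' b) \<partial>PiM {..<n} (\<lambda>_. P0))
    = 0"
proof -
  have P0: "\<And>i. i \<in> {..<n} \<Longrightarrow> prob_space P0" using prob_space_P0 by simp
  note measurable = measurable_centred_kernel_pair[OF sets_P0 sets_P0]
  consider "a < n" "b < n" | "a < n" "\<not> b < n" | "\<not> a < n" "b < n"
    using data_point by blast
  then show ?thesis
  proof cases
    case 1
    then have "(\<integral>x. centred_kernel k P0 (x a) (x b) \<partial>PiM {..<n} (\<lambda>_. P0))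
        = (\<integral>u. (\<integral>v. centred_kernel k P0 u v \<partial>P0) \<partial>P0)"
      using \<open>a \<noteq> b\<close> abs_centred_kernel_le_4 measurable space_P0
      by (intro integral_PiM_components_pair[OF P0, where B=4]) auto
    also have "\<dots> = (\<integral>u. 0 \<partial>P0)"
      using integral_centred_kernel_right space_P0 by (intro Bochner_Integration.integral_cong) auto
    finally show ?thesis using 1 by (simp add: append_points_def)
  next
    case 2
    then have "x' (b - n) \<in> space X" using x' b by simp
    then show ?thesis
      using 2 integral_PiM_component[of "{..<n}" "\<lambda>_. P0" a "\<lambda>u. centred_kernel k P0 u (x' (b - n))"]
        measurable_Pair1[OF measurable] integral_centred_kernel_left prob_space_P0
      by (simp add: append_points_def space_P0)
  next
    case 3
    then have "x' (a - n) \<in> space X" using x' a by simp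
    then show ?thesis
      using 3 integral_PiM_component[of "{..<n}" "\<lambda>_. P0" b "\<lambda>v. centred_kernel k P0 (x' (a - n)) v"]
        measurable_Pair2[OF measurable] integral_centred_kernel_right prob_space_P0
      by (simp add: append_points_def space_P0)
  qed
qed

lemma integral_centred_quadratic_form_le:
  fixes x' :: "nat \<Rightarrow> 'a"
  assumes w: "\<And>a. a < n + T \<Longrightarrow> 0 \<le> w a" and x': "\<And>i. i < T \<Longrightarrow> x' i \<in> space X"
  shows "(\<integral>x. centred_quadratic_form k P0 (n + T) w (append_points n x x') \<partial>PiM {..<n} (\<lambda>_. P0))
    \<le> MMD2_weight_bound n T w"
proof -
  define \<Omega> where "\<Omega> = PiM {..<n} (\<lambda>_. P0)"
  define E where "E a b = (\<integral>x. centred_kernel k P0 (append_points n x x' a) (append_points n x x' b) \<partial>\<Omega>)"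
    for a b
  interpret \<Omega>: prob_space \<Omega> unfolding \<Omega>_def using prob_space_P0 by (intro prob_space_PiM) auto
  have space: "append_points n x x' a \<in> space X" if "x \<in> space \<Omega>" "a < n + T" for x a
    using that x' space_P0 by (intro append_points_in_space) (auto simp: \<Omega>_def space_PiM PiE_iff)
  have integrable:
    "integrable \<Omega> (\<lambda>x. centred_kernel k P0 (append_points n x x' a) (append_points n x x' b))"
    if "a < n + T" "b < n + T" for a b
  proof (rule \<Omega>.integrable_const_bound[where B=4])
    have "(\<lambda>x. append_points n x x' c) \<in> measurable \<Omega> X" if "c < n + T" for c
      unfolding \<Omega>_def using that x' by (intro measurable_append_points measurable_component_P0) auto
    with that show "(\<lambda>x. centred_kernel k P0 (append_points n x x' a) (append_points n x x' b))
        \<in> borel_measurable \<Omega>"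
      by (intro measurable_centred_kernel_compose)
  qed (use that space abs_centred_kernel_le_4 in auto)
  have term_le: "w a * w b * E a b \<le> 4 * (if a = b \<and> a < n then (w a)\<^sup>2 else 0)
      + 4 * (if n \<le> a \<and> n \<le> b then w a * w b else 0)"
    if ab: "a < n + T" "b < n + T" for a b
  proof -
    have nonneg: "0 \<le> w a * w b" using w ab by simp
    have "\<bar>E a b\<bar> \<le> 4"
      unfolding E_def using ab space abs_centred_kernel_le_4 by (intro \<Omega>.abs_integral_le_const) auto
    then have "w a * w b * E a b \<le> 4 * (w a * w b)"
      using nonneg by (metis abs_le_iff mult.commute mult_left_mono)
    moreover have "E a b = 0" if "a < n \<or> b < n" "a \<noteq> b"
      unfolding E_def \<Omega>_def using ab that x' by (intro integral_centred_kernel_append_points) auto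
    ultimately show ?thesis
      using nonneg by (cases "a = b") (auto simp: power2_eq_square)
  qed
  have "(\<integral>x. (\<Sum>a<n + T. \<Sum>b<n + T. w a * w b *
            centred_kernel k P0 (append_points n x x' a) (append_points n x x' b)) \<partial>\<Omega>)
      = (\<Sum>a<n + T. \<Sum>b<n + T. w a * w b * E a b)"
    by (subst Bochner_Integration.integral_sum, (auto intro!: integrable_sum integrable)[1],
        intro sum.cong refl, subst Bochner_Integration.integral_sum)
       (auto intro!: integrable simp: E_def)
  also have "\<dots> \<le> (\<Sum>a<n + T. \<Sum>b<n + T. 4 * (if a = b \<and> a < n then (w a)\<^sup>2 else 0)
      + 4 * (if n \<le> a \<and> n \<le> b then w a * w b else 0))"
    using term_le by (intro sum_mono) auto
  also have "\<dots> = MMD2_weight_bound n T w"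
    by (rule MMD2_weight_bound_eq_sum[symmetric])
  finally show ?thesis unfolding \<Omega>_def centred_quadratic_form_def .
qed

lemma abs_centred_quadratic_form_le:
  assumes y: "\<And>a. a < N \<Longrightarrow> y a \<in> space X"
  shows "\<bar>centred_quadratic_form k P0 N w y\<bar> \<le> 4 * (\<Sum>a<N. \<bar>w a\<bar>)\<^sup>2"
proof -
  have "\<bar>centred_quadratic_form k P0 N w y\<bar> \<le> (\<Sum>a<N. \<Sum>b<N. \<bar>w a * w b * centred_kernel k P0 (y a) (y b)\<bar>)"
    unfolding centred_quadratic_form_def by (rule order_trans[OF sum_abs sum_mono[OF sum_abs]])
  also have "\<dots> \<le> (\<Sum>a<N. \<Sum>b<N. \<bar>w a\<bar> * \<bar>w b\<bar> * 4)"
    using y abs_centred_kernel_le_4 by (intro sum_mono) (simp add: abs_mult mult_left_mono)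
  finally show ?thesis
    by (simp add: power2_eq_square sum_product sum_distrib_left mult_ac)
qed

lemma measurable_centred_quadratic_form:
  assumes w: "\<And>a. a < N \<Longrightarrow> (\<lambda>z. w z a) \<in> borel_measurable M"
    and y: "\<And>a. a < N \<Longrightarrow> (\<lambda>z. y z a) \<in> measurable M X"
  shows "(\<lambda>z. centred_quadratic_form k P0 N (w z) (y z)) \<in> borel_measurable M"
  unfolding centred_quadratic_form_def
  using w y by (intro borel_measurable_sum borel_measurable_times measurable_centred_kernel_compose) auto

lemma nn_integral_centred_quadratic_form_le:
  fixes x' :: "nat \<Rightarrow> 'a"
  assumes w: "\<And>a. a < n + T \<Longrightarrow> 0 \<le> w a" and sum_w: "(\<Sum>a<n + T. w a) = 1"
    and x': "\<And>i. i < T \<Longrightarrow> x' i \<in> space X"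
  shows "(\<integral>\<^sup>+ x. ennreal (centred_quadratic_form k P0 (n + T) w (append_points n x x')) \<partial>PiM {..<n} (\<lambda>_. P0))
    \<le> ennreal (MMD2_weight_bound n T w)"
proof -
  define \<Omega> where "\<Omega> = PiM {..<n} (\<lambda>_. P0)"
  interpret \<Omega>: prob_space \<Omega> unfolding \<Omega>_def using prob_space_P0 by (intro prob_space_PiM) auto
  have space: "\<And>a. a < n + T \<Longrightarrow> append_points n x x' a \<in> space X" if "x \<in> space \<Omega>" for x
    using that x' space_P0 by (intro append_points_in_space) (auto simp: \<Omega>_def space_PiM PiE_iff)
  have "integrable \<Omega> (\<lambda>x. centred_quadratic_form k P0 (n + T) w (append_points n x x'))"
  proof (rule \<Omega>.integrable_const_bound[where B="4 * (\<Sum>a<n + T. \<bar>w a\<bar>)\<^sup>2"])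
    show "(\<lambda>x. centred_quadratic_form k P0 (n + T) w (append_points n x x')) \<in> borel_measurable \<Omega>"
      unfolding \<Omega>_def using x'
      by (intro measurable_centred_quadratic_form measurable_append_points measurable_component_P0) auto
  qed (use space abs_centred_quadratic_form_le in auto)
  moreover have "0 \<le> centred_quadratic_form k P0 (n + T) w (append_points n x x')"
    if x: "x \<in> space \<Omega>" for x
  proof -
    let ?R = "weighted_point_measure X (n + T) w (append_points n x x')"
    have "prob_space ?R"
      using space[OF x] w sum_w by (intro prob_space_weighted_point_measure)
    then have "0 \<le> MMD2 k ?R P0"
      by (intro MMD2_nonneg) (auto simp: prob_space_P0 sets_P0)
    also have "MMD2 k ?R P0 = centred_quadratic_form k P0 (n + T) w (append_points n x x')"
      using space[OF x] w sum_w by (intro MMD2_weighted_point_measure)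
    finally show ?thesis .
  qed
  ultimately show ?thesis
    using integral_centred_quadratic_form_le[OF w x']
    by (simp add: \<Omega>_def nn_integral_eq_integral ennreal_leI AE_I2)
qed

end

section \<open>Gamma and Dirichlet distributions\<close>

lemma measurable_gamma_density [measurable]: "gamma_density a \<in> borel_measurable borel"
  unfolding gamma_density_def[abs_def] by measurable

lemma nn_integral_gamma_power:
  assumes a: "0 < a"
  shows "(\<integral>\<^sup>+ x. ennreal (x ^ p) \<partial>density lborel (gamma_density a)) = ennreal (Gamma (a + real p) / Gamma a)"
proof -
  have Gamma_a: "0 < Gamma a" using a by simp
  have "(\<integral>\<^sup>+ x. ennreal (x ^ p) \<partial>density lborel (gamma_density a))
      = (\<integral>\<^sup>+ x. gamma_density a x * ennreal (x ^ p) \<partial>lborel)"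
    by (rule nn_integral_density) auto
  also have "\<dots> = (\<integral>\<^sup>+ x. ennreal (indicator {0..} x * x powr (a + real p - 1) / exp x) * ennreal (1 / Gamma a) \<partial>lborel)"
  proof (rule nn_integral_cong)
    fix x :: real
    show "gamma_density a x * ennreal (x ^ p)
        = ennreal (indicator {0..} x * x powr (a + real p - 1) / exp x) * ennreal (1 / Gamma a)"
    proof (cases "0 < x")
      case True
      then have "x powr (a - 1) * exp (- x) / Gamma a * x ^ p = x powr (a + real p - 1) / exp x * (1 / Gamma a)"
        by (simp add: powr_realpow[symmetric] powr_add[symmetric] exp_minus field_simps)
      then show ?thesis
        using True Gamma_a
        by (simp add: gamma_density_def ennreal_mult'[symmetric] ennreal_mult''[symmetric] del: ennreal_mult)
    qed (cases "x = 0"; auto simp: gamma_density_def indicator_def)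
  qed
  also have "\<dots> = ennreal (Gamma (a + real p)) * ennreal (1 / Gamma a)"
    using Gamma_conv_nn_integral_real[of "a + real p"] a by (simp add: nn_integral_multc)
  also have "\<dots> = ennreal (Gamma (a + real p) / Gamma a)"
    using a Gamma_a by (simp add: ennreal_mult''[symmetric] less_imp_le)
  finally show ?thesis .
qed

lemma prob_space_gamma:
  assumes "0 < a"
  shows "prob_space (density lborel (gamma_density a))"
proof
  have "emeasure (density lborel (gamma_density a)) UNIV
      = (\<integral>\<^sup>+ x. ennreal (x ^ 0) \<partial>density lborel (gamma_density a))"
    by simp
  also have "\<dots> = 1" using nn_integral_gamma_power[OF assms, of 0] Gamma_real_pos[OF assms] by simp
  finally show "emeasure (density lborel (gamma_density a)) (space (density lborel (gamma_density a))) = 1"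
    by simp
qed

lemma nn_integral_gamma_mean:
  assumes "0 < a"
  shows "(\<integral>\<^sup>+ x. ennreal x \<partial>density lborel (gamma_density a)) = ennreal a"
proof -
  have "Gamma (a + 1) = a * Gamma a"
    using assms by (intro Gamma_plus1) (auto dest: nonpos_Ints_nonpos)
  then show ?thesis using nn_integral_gamma_power[OF assms, of 1] Gamma_real_pos[OF assms] by simp
qed

lemma nn_integral_gamma_1_square:
  "(\<integral>\<^sup>+ x. ennreal (x\<^sup>2) \<partial>density lborel (gamma_density 1)) = 2"
proof -
  have "Gamma (1 + real 2) = 2"
    using Gamma_fact[of 2] by (simp add: numeral_3_eq_3 add.commute)
  then show ?thesis using nn_integral_gamma_power[of 1 2] by simp
qed

lemma nn_integral_gamma_1_exp_neg:
  "(\<integral>\<^sup>+ x. ennreal (exp (- x)) \<partial>density lborel (gamma_density 1)) = ennreal (1 / 2)"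
proof -
  \<comment> \<open>\<open>e\<^sup>-\<^sup>x \<cdot> e\<^sup>-\<^sup>x = e\<^sup>-\<^sup>2\<^sup>x\<close> is half the exponential density with rate 2\<close>
  have "(\<integral>\<^sup>+ x. ennreal (exp (- x)) \<partial>density lborel (gamma_density 1))
      = (\<integral>\<^sup>+ x. gamma_density 1 x * ennreal (exp (- x)) \<partial>lborel)"
    by (rule nn_integral_density) auto
  also have "\<dots> = (\<integral>\<^sup>+ x. ennreal (exponential_density 2 x * (1 / 2)) \<partial>lborel)"
  proof (rule nn_integral_cong_AE)
    show "AE x in lborel. gamma_density 1 x * ennreal (exp (- x)) = ennreal (exponential_density 2 x * (1 / 2))"
      using AE_lborel_singleton[of 0]
    proof eventually_elim
      case (elim x)
      have "exp (- x) * exp (- x) = exp (- x * 2)" by (simp add: exp_add[symmetric])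
      then show ?case
        using elim by (cases "0 < x")
          (simp_all add: gamma_density_def exponential_density_def ennreal_mult''[symmetric] del: ennreal_mult)
    qed
  qed
  also have "\<dots> = (\<integral>\<^sup>+ x. ennreal (exponential_density 2 x) * ennreal (1 / 2) \<partial>lborel)"
    by (intro nn_integral_cong ennreal_mult'') simp
  also have "\<dots> = (\<integral>\<^sup>+ x. ennreal (exponential_density 2 x) \<partial>lborel) * ennreal (1 / 2)"
    by (rule nn_integral_multc) auto
  also have "\<dots> = ennreal (1 / 2)"
    using nn_integral_erlang_ith_moment[of 2 0 0] by simp
  finally show ?thesis .
qed

definition normalise_weights :: "nat \<Rightarrow> (nat \<Rightarrow> real) \<Rightarrow> nat \<Rightarrow> real"
  where "normalise_weights N g = (\<lambda>i\<in>{..<N}. g i / (\<Sum>j<N. g j))"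

definition gamma_product :: "nat \<Rightarrow> (nat \<Rightarrow> real) \<Rightarrow> (nat \<Rightarrow> real) measure"
  where "gamma_product N a = PiM {..<N} (\<lambda>i. density lborel (gamma_density (a i)))"

lemma dirichlet_eq_distr_gamma_product:
  "dirichlet N a = distr (gamma_product N a) (PiM {..<N} (\<lambda>_. borel)) (normalise_weights N)"
  by (simp add: dirichlet_def gamma_product_def normalise_weights_def[abs_def])

lemma measurable_gamma_product_component:
  "i < N \<Longrightarrow> (\<lambda>g. g i) \<in> borel_measurable (gamma_product N a)"
  using measurable_component_singleton[of i "{..<N}" "\<lambda>i. density lborel (gamma_density (a i))"]
  by (simp add: gamma_product_def cong: measurable_cong_sets)

lemma measurable_normalise_weights:
  "normalise_weights N \<in> measurable (gamma_product N a) (PiM {..<N} (\<lambda>_. borel))"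
  unfolding normalise_weights_def using measurable_gamma_product_component
  by (intro measurable_restrict) auto

lemma prob_space_gamma_product:
  "(\<And>i. i < N \<Longrightarrow> 0 < a i) \<Longrightarrow> prob_space (gamma_product N a)"
  unfolding gamma_product_def by (intro prob_space_PiM prob_space_gamma) auto

lemma prob_space_dirichlet: "(\<And>i. i < N \<Longrightarrow> 0 < a i) \<Longrightarrow> prob_space (dirichlet N a)"
  unfolding dirichlet_eq_distr_gamma_product
  by (intro prob_space.prob_space_distr prob_space_gamma_product measurable_normalise_weights)

lemma nn_integral_gamma_product_component:
  assumes a: "\<And>i. i < N \<Longrightarrow> 0 < a i" and i: "i < N" and f: "f \<in> borel_measurable borel"
  shows "(\<integral>\<^sup>+ g. f (g i) \<partial>gamma_product N a) = (\<integral>\<^sup>+ x. f x \<partial>density lborel (gamma_density (a i)))"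
  unfolding gamma_product_def using a i f
  by (intro nn_integral_PiM_component prob_space_gamma) (auto cong: measurable_cong_sets)

lemma AE_gamma_product_pos:
  assumes a: "\<And>i. i < N \<Longrightarrow> 0 < a i"
  shows "AE g in gamma_product N a. \<forall>i<N. 0 < g i"
proof -
  have "AE g in gamma_product N a. 0 < g i" if i: "i < N" for i
  proof -
    have "AE x in density lborel (gamma_density (a i)). 0 < x"
      by (subst AE_density) (auto simp: gamma_density_def split: if_splits)
    with i a show ?thesis
      unfolding gamma_product_def by (intro AE_PiM_component prob_space_gamma) auto
  qed
  then have "AE g in gamma_product N a. \<forall>i\<in>{..<N}. 0 < g i"
    by (intro eventually_ball_finite) auto
  then show ?thesis by (rule eventually_mono) simp
qed

lemma AE_dirichlet_simplex:
  assumes N: "0 < N" and a: "\<And>i. i < N \<Longrightarrow> 0 < a i"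
  shows "AE w in dirichlet N a. (\<forall>i<N. 0 \<le> w i) \<and> (\<Sum>i<N. w i) = 1"
proof -
  have "AE g in gamma_product N a. \<forall>i<N. 0 < g i"
    using a by (rule AE_gamma_product_pos)
  then have "AE g in gamma_product N a. (\<forall>i<N. 0 \<le> normalise_weights N g i)
      \<and> (\<Sum>i<N. normalise_weights N g i) = 1"
  proof eventually_elim
    case (elim g)
    then have "0 < (\<Sum>j<N. g j)" using N by (intro sum_pos) auto
    with elim show ?case
      by (simp add: normalise_weights_def sum_divide_distrib[symmetric] less_imp_le)
  qed
  then show ?thesis
    unfolding dirichlet_eq_distr_gamma_product
    using measurable_normalise_weights by (subst AE_distr_iff) auto
qed

text \<open>Either the data part \<open>S\<^sub>d\<close> of the normaliser is at least \<open>n / 2\<close>, and normalising costs at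
  most a factor \<open>2 / n\<close>, or it is not, an event whose Chernoff bound is the last term.\<close>
lemma normalised_weight_bound_le:
  fixes Q S\<^sub>d S\<^sub>p :: real
  assumes n: "1 \<le> n" and Q: "0 \<le> Q" "Q \<le> S\<^sub>d\<^sup>2" and S\<^sub>d: "0 < S\<^sub>d" and S\<^sub>p: "0 \<le> S\<^sub>p"
  shows "4 * (Q / (S\<^sub>d + S\<^sub>p)\<^sup>2) + 4 * (S\<^sub>p / (S\<^sub>d + S\<^sub>p))\<^sup>2
    \<le> 16 / (real n)\<^sup>2 * Q + 8 / real n * S\<^sub>p + 8 * exp (real n / 2 - S\<^sub>d)"
proof -
  have p_le: "S\<^sub>p / (S\<^sub>d + S\<^sub>p) \<le> 1" "0 \<le> S\<^sub>p / (S\<^sub>d + S\<^sub>p)" using S\<^sub>d S\<^sub>p by auto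
  have "0 \<le> 8 * exp (real n / 2 - S\<^sub>d)" by simp
  show ?thesis
  proof (cases "real n / 2 \<le> S\<^sub>d")
    case True
    have Q_bound: "Q / (S\<^sub>d + S\<^sub>p)\<^sup>2 \<le> Q / (real n / 2)\<^sup>2"
      using True Q n S\<^sub>p by (intro divide_left_mono power_mono) auto
    have "(S\<^sub>p / (S\<^sub>d + S\<^sub>p))\<^sup>2 \<le> S\<^sub>p / (S\<^sub>d + S\<^sub>p)"
      unfolding power2_eq_square using p_le by (rule mult_left_le)
    also have "\<dots> \<le> S\<^sub>p / (real n / 2)"
      using True n S\<^sub>p by (intro divide_left_mono) auto
    finally have "(S\<^sub>p / (S\<^sub>d + S\<^sub>p))\<^sup>2 \<le> 2 / real n * S\<^sub>p" by (simp add: mult.commute)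
    moreover have "Q / (real n / 2)\<^sup>2 = 4 / (real n)\<^sup>2 * Q" by (simp add: power_divide)
    ultimately show ?thesis
      using Q_bound \<open>0 \<le> 8 * exp (real n / 2 - S\<^sub>d)\<close> by linarith
  next
    case False
    have "S\<^sub>d\<^sup>2 \<le> (S\<^sub>d + S\<^sub>p)\<^sup>2" using S\<^sub>d S\<^sub>p by (intro power_mono) auto
    with Q have "Q \<le> (S\<^sub>d + S\<^sub>p)\<^sup>2" by linarith
    then have "Q / (S\<^sub>d + S\<^sub>p)\<^sup>2 \<le> 1" using S\<^sub>d S\<^sub>p by simp
    moreover have "1 \<le> exp (real n / 2 - S\<^sub>d)" using False by simp
    moreover have "0 \<le> 16 / (real n)\<^sup>2 * Q" "0 \<le> 8 / real n * S\<^sub>p"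
      using Q S\<^sub>p by simp_all
    ultimately show ?thesis
      using power_le_one[OF p_le(2,1), of 2] by linarith
  qed
qed

lemma MMD2_weight_bound_normalise_le:
  assumes n: "1 \<le> n" and g: "\<And>i. i < n + T \<Longrightarrow> 0 < g i"
  shows "MMD2_weight_bound n T (normalise_weights (n + T) g)
    \<le> 16 / (real n)\<^sup>2 * (\<Sum>i<n. (g i)\<^sup>2) + 8 / real n * (\<Sum>i<T. g (n + i))
      + 8 * exp (real n / 2) * (\<Prod>i<n. exp (- g i))"
proof -
  define S\<^sub>d where "S\<^sub>d = (\<Sum>i<n. g i)"
  define S\<^sub>p where "S\<^sub>p = (\<Sum>i<T. g (n + i))"
  define Q where "Q = (\<Sum>i<n. (g i)\<^sup>2)"
  have "0 < S\<^sub>d" unfolding S\<^sub>d_def using n g by (intro sum_pos) (auto simp: lessThan_empty_iff)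
  moreover have "0 \<le> S\<^sub>p" unfolding S\<^sub>p_def using g by (intro sum_nonneg) (auto simp: less_imp_le)
  moreover have "0 \<le> Q" unfolding Q_def by (intro sum_nonneg) auto
  moreover have "Q \<le> (\<Sum>i<n. g i * S\<^sub>d)"
    unfolding Q_def power2_eq_square S\<^sub>d_def using g
    by (intro sum_mono mult_left_mono member_le_sum) (auto simp: less_imp_le)
  then have "Q \<le> S\<^sub>d\<^sup>2" by (simp add: S\<^sub>d_def sum_distrib_right power2_eq_square)
  ultimately have "4 * (Q / (S\<^sub>d + S\<^sub>p)\<^sup>2) + 4 * (S\<^sub>p / (S\<^sub>d + S\<^sub>p))\<^sup>2
      \<le> 16 / (real n)\<^sup>2 * Q + 8 / real n * S\<^sub>p + 8 * exp (real n / 2 - S\<^sub>d)"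
    using n by (intro normalised_weight_bound_le) auto
  moreover have "(\<Sum>j<n + T. g j) = S\<^sub>d + S\<^sub>p"
    unfolding S\<^sub>d_def S\<^sub>p_def by (rule sum_lessThan_add)
  moreover have "exp (- S\<^sub>d) = (\<Prod>i<n. exp (- g i))"
    unfolding S\<^sub>d_def by (simp add: exp_sum[symmetric] sum_negf[symmetric])
  then have "exp (real n / 2 - S\<^sub>d) = exp (real n / 2) * (\<Prod>i<n. exp (- g i))"
    by (metis diff_conv_add_uminus exp_add)
  ultimately show ?thesis
    by (simp add: MMD2_weight_bound_def normalise_weights_def power_divide sum_divide_distrib[symmetric]
        Q_def S\<^sub>p_def)
qed

lemma ennreal_MMD2_weight_bound_normalise_le:
  assumes n: "1 \<le> n" and g: "\<forall>i<n + T. 0 < g i"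
  shows "ennreal (MMD2_weight_bound n T (normalise_weights (n + T) g))
    \<le> ennreal (16 / (real n)\<^sup>2) * (\<Sum>i<n. ennreal ((g i)\<^sup>2)) + ennreal (8 / real n) * (\<Sum>i<T. ennreal (g (n + i)))
      + ennreal (8 * exp (real n / 2)) * (\<Prod>i<n. ennreal (exp (- g i)))"
proof -
  have "(\<Sum>i<T. ennreal (g (n + i))) = ennreal (\<Sum>i<T. g (n + i))"
    using g by (intro sum_ennreal) (simp add: less_imp_le)
  moreover have "(\<Sum>i<T. g (n + i)) \<ge> 0"
    using g by (intro sum_nonneg) (simp add: less_imp_le)
  ultimately have "ennreal (16 / (real n)\<^sup>2) * (\<Sum>i<n. ennreal ((g i)\<^sup>2))
      + ennreal (8 / real n) * (\<Sum>i<T. ennreal (g (n + i)))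
      + ennreal (8 * exp (real n / 2)) * (\<Prod>i<n. ennreal (exp (- g i)))
    = ennreal (16 / (real n)\<^sup>2 * (\<Sum>i<n. (g i)\<^sup>2) + 8 / real n * (\<Sum>i<T. g (n + i))
      + 8 * exp (real n / 2) * (\<Prod>i<n. exp (- g i)))"
    by (simp add: sum_ennreal prod_ennreal sum_nonneg prod_nonneg
        ennreal_plus[symmetric] ennreal_mult''[symmetric] del: ennreal_plus ennreal_mult)
  moreover have "MMD2_weight_bound n T (normalise_weights (n + T) g)
      \<le> 16 / (real n)\<^sup>2 * (\<Sum>i<n. (g i)\<^sup>2) + 8 / real n * (\<Sum>i<T. g (n + i))
        + 8 * exp (real n / 2) * (\<Prod>i<n. exp (- g i))"
    using g n by (intro MMD2_weight_bound_normalise_le) auto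
  ultimately show ?thesis by (metis ennreal_leI)
qed

lemma post_weights_param_pos: "0 < T \<Longrightarrow> 0 < \<alpha> \<Longrightarrow> 0 < post_weights_param n T \<alpha> i"
  by (simp add: post_weights_param_def)

context
  fixes n T :: nat and \<alpha> :: real
  assumes n: "1 \<le> n" and T: "1 \<le> T" and \<alpha>: "0 < \<alpha>"
begin

lemma nn_integral_gamma_product_data_squares:
  "(\<integral>\<^sup>+ g. (\<Sum>i<n. ennreal ((g i)\<^sup>2)) \<partial>gamma_product (n + T) (post_weights_param n T \<alpha>))
    = ennreal (2 * real n)"
proof -
  have "(\<integral>\<^sup>+ g. (\<Sum>i<n. ennreal ((g i)\<^sup>2)) \<partial>gamma_product (n + T) (post_weights_param n T \<alpha>))
      = (\<Sum>i<n. \<integral>\<^sup>+ g. ennreal ((g i)\<^sup>2) \<partial>gamma_product (n + T) (post_weights_param n T \<alpha>))"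
    using measurable_gamma_product_component by (intro nn_integral_sum) auto
  also have "\<dots> = (\<Sum>i<n. 2)"
    using T \<alpha> post_weights_param_pos
    by (intro sum.cong refl, subst nn_integral_gamma_product_component)
       (auto simp: post_weights_param_def nn_integral_gamma_1_square)
  finally show ?thesis by (simp add: ennreal_of_nat_eq_real_of_nat ennreal_mult'' mult.commute)
qed

lemma nn_integral_gamma_product_prior_sum:
  "(\<integral>\<^sup>+ g. (\<Sum>i<T. ennreal (g (n + i))) \<partial>gamma_product (n + T) (post_weights_param n T \<alpha>))
    = ennreal \<alpha>"
proof -
  have "(\<integral>\<^sup>+ g. (\<Sum>i<T. ennreal (g (n + i))) \<partial>gamma_product (n + T) (post_weights_param n T \<alpha>))
      = (\<Sum>i<T. \<integral>\<^sup>+ g. ennreal (g (n + i)) \<partial>gamma_product (n + T) (post_weights_param n T \<alpha>))"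
    using measurable_gamma_product_component by (intro nn_integral_sum) auto
  also have "\<dots> = (\<Sum>i<T. ennreal (\<alpha> / real T))"
    using T \<alpha> post_weights_param_pos
    by (intro sum.cong refl, subst nn_integral_gamma_product_component)
       (auto simp: post_weights_param_def nn_integral_gamma_mean)
  also have "\<dots> = ennreal \<alpha>"
    using T \<alpha> by (simp add: ennreal_of_nat_eq_real_of_nat ennreal_mult''[symmetric] del: ennreal_mult)
  finally show ?thesis .
qed

lemma nn_integral_gamma_product_exp_neg:
  "(\<integral>\<^sup>+ g. (\<Prod>i<n. ennreal (exp (- g i))) \<partial>gamma_product (n + T) (post_weights_param n T \<alpha>))
    = ennreal ((1 / 2) ^ n)"
proof -
  let ?M = "\<lambda>i. density lborel (gamma_density (post_weights_param n T \<alpha> i))"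
  define f where "f i = (if i < n then (\<lambda>x. ennreal (exp (- x))) else (\<lambda>_. 1))" for i
  interpret product_sigma_finite ?M
    unfolding product_sigma_finite_def
    using T \<alpha> by (auto intro!: prob_space_imp_sigma_finite prob_space_gamma post_weights_param_pos)
  have "(\<integral>\<^sup>+ g. (\<Prod>i<n. ennreal (exp (- g i))) \<partial>gamma_product (n + T) (post_weights_param n T \<alpha>))
      = (\<integral>\<^sup>+ g. (\<Prod>i<n + T. f i (g i)) \<partial>PiM {..<n + T} ?M)"
    by (simp add: gamma_product_def f_def prod_lessThan_add)
  also have "\<dots> = (\<Prod>i<n + T. integral\<^sup>N (?M i) (f i))"
    by (rule product_nn_integral_prod) (auto simp: f_def cong: measurable_cong_sets)
  also have "\<dots> = (\<Prod>i<n + T. if i < n then ennreal (1 / 2) else 1)"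
  proof (intro prod.cong refl)
    fix i
    have "prob_space (?M i)"
      using T \<alpha> by (intro prob_space_gamma post_weights_param_pos) auto
    then show "integral\<^sup>N (?M i) (f i) = (if i < n then ennreal (1 / 2) else 1)"
      using prob_space.emeasure_space_1[of "?M i"]
      by (cases "i < n") (simp_all add: f_def post_weights_param_def nn_integral_gamma_1_exp_neg)
  qed
  also have "\<dots> = ennreal (1 / 2) ^ n"
    by (simp add: prod_lessThan_add)
  also have "\<dots> = ennreal ((1 / 2) ^ n)"
    by (rule ennreal_power) simp
  finally show ?thesis .
qed

lemma nn_integral_dirichlet_MMD2_weight_bound:
  "(\<integral>\<^sup>+ w. ennreal (MMD2_weight_bound n T w) \<partial>dirichlet (n + T) (post_weights_param n T \<alpha>))
    \<le> ennreal ((72 + 8 * \<alpha>) / real n)"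
proof -
  let ?G = "gamma_product (n + T) (post_weights_param n T \<alpha>)"
  define S\<^sub>2 where "S\<^sub>2 g = (\<Sum>i<n. ennreal ((g i)\<^sup>2))" for g :: "nat \<Rightarrow> real"
  define S\<^sub>p where "S\<^sub>p g = (\<Sum>i<T. ennreal (g (n + i)))" for g :: "nat \<Rightarrow> real"
  define E where "E g = (\<Prod>i<n. ennreal (exp (- g i)))" for g :: "nat \<Rightarrow> real"
  have component: "(\<lambda>g. g i) \<in> borel_measurable ?G" if "i < n + T" for i
    using that by (rule measurable_gamma_product_component)
  have [measurable]: "S\<^sub>2 \<in> borel_measurable ?G"
    unfolding S\<^sub>2_def[abs_def] by (intro borel_measurable_sum) (use component in force)
  have [measurable]: "S\<^sub>p \<in> borel_measurable ?G"
    unfolding S\<^sub>p_def[abs_def] by (intro borel_measurable_sum) (use component in force)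
  have [measurable]: "E \<in> borel_measurable ?G"
    unfolding E_def[abs_def] by (intro borel_measurable_prod_ennreal) (use component in force)
  have "(\<lambda>w. ennreal (MMD2_weight_bound n T w)) \<in> borel_measurable (PiM {..<n + T} (\<lambda>_. borel))"
    unfolding MMD2_weight_bound_def by measurable
  then have "(\<integral>\<^sup>+ w. ennreal (MMD2_weight_bound n T w) \<partial>dirichlet (n + T) (post_weights_param n T \<alpha>))
      = (\<integral>\<^sup>+ g. ennreal (MMD2_weight_bound n T (normalise_weights (n + T) g)) \<partial>?G)"
    unfolding dirichlet_eq_distr_gamma_product using measurable_normalise_weights
    by (subst nn_integral_distr) auto
  also have "\<dots> \<le> (\<integral>\<^sup>+ g. ennreal (16 / (real n)\<^sup>2) * S\<^sub>2 g + ennreal (8 / real n) * S\<^sub>p g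
      + ennreal (8 * exp (real n / 2)) * E g \<partial>?G)"
  proof (rule nn_integral_mono_AE)
    have "AE g in ?G. \<forall>i<n + T. 0 < g i"
      using T \<alpha> post_weights_param_pos by (intro AE_gamma_product_pos) auto
    then show "AE g in ?G. ennreal (MMD2_weight_bound n T (normalise_weights (n + T) g))
        \<le> ennreal (16 / (real n)\<^sup>2) * S\<^sub>2 g + ennreal (8 / real n) * S\<^sub>p g
          + ennreal (8 * exp (real n / 2)) * E g"
      unfolding S\<^sub>2_def S\<^sub>p_def E_def
      by (rule eventually_mono) (rule ennreal_MMD2_weight_bound_normalise_le[OF n])
  qed
  also have "\<dots> = ennreal (16 / (real n)\<^sup>2) * ennreal (2 * real n) + ennreal (8 / real n) * ennreal \<alpha>
      + ennreal (8 * exp (real n / 2)) * ennreal ((1 / 2) ^ n)"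
    using nn_integral_gamma_product_data_squares nn_integral_gamma_product_prior_sum
      nn_integral_gamma_product_exp_neg
    by (simp add: nn_integral_add nn_integral_cmult S\<^sub>2_def[symmetric] S\<^sub>p_def[symmetric] E_def[symmetric])
  also have "\<dots> = ennreal (32 / real n + 8 * \<alpha> / real n + 8 * (exp (real n / 2) * (1 / 2) ^ n))"
    using n \<alpha> by (simp add: ennreal_plus[symmetric] ennreal_mult''[symmetric] power2_eq_square
        del: ennreal_plus ennreal_mult)
  also have "\<dots> \<le> ennreal ((72 + 8 * \<alpha>) / real n)"
    using exp_half_mult_half_power_le[OF n] by (intro ennreal_leI) (simp add: add_divide_distrib)
  finally show ?thesis .
qed

end

lemma emeasure_distr_le_Markov:
  assumes s: "0 < s" and D[measurable]: "D \<in> borel_measurable M"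
    and event: "AE \<omega> in M. f \<omega> \<in> S \<longrightarrow> s \<le> D \<omega>"
  shows "emeasure (distr M N f) S \<le> ennreal (1 / s) * (\<integral>\<^sup>+ \<omega>. ennreal (D \<omega>) \<partial>M)"
proof -
  have "emeasure (distr M N f) S \<le> emeasure M (f -` S \<inter> space M)"
    by (rule emeasure_distr_le_preimage)
  also have "\<dots> \<le> emeasure M {\<omega> \<in> space M. 1 \<le> ennreal (1 / s) * ennreal (D \<omega>)}"
  proof (rule emeasure_mono_AE)
    show "AE \<omega> in M. \<omega> \<in> f -` S \<inter> space M \<longrightarrow> \<omega> \<in> {\<omega> \<in> space M. 1 \<le> ennreal (1 / s) * ennreal (D \<omega>)}"
      using event
    proof eventually_elim
      case (elim \<omega>)
      { assume "\<omega> \<in> f -` S \<inter> space M"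
        with elim s have "1 \<le> 1 / s * D \<omega>" "0 \<le> D \<omega>"
          by (auto simp: field_simps)
        then have "1 \<le> ennreal (1 / s) * ennreal (D \<omega>)"
          using s by (simp add: ennreal_mult''[symmetric] ennreal_leI del: ennreal_mult) }
      then show ?case by auto
    qed
  qed measurable
  also have "\<dots> \<le> ennreal (1 / s) * (\<integral>\<^sup>+ \<omega>. ennreal (D \<omega>) * indicator (space M) \<omega> \<partial>M)"
    using nn_integral_Markov_inequality[of "\<lambda>\<omega>. ennreal (D \<omega>)" "space M" M] D by simp
  also have "(\<integral>\<^sup>+ \<omega>. ennreal (D \<omega>) * indicator (space M) \<omega> \<partial>M) = (\<integral>\<^sup>+ \<omega>. ennreal (D \<omega>) \<partial>M)"
    by (intro nn_integral_cong) simp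
  finally show ?thesis .
qed

lemma integral_measure_distr_le_Markov:
  assumes Data: "prob_space Data" and M: "prob_space M"
    and D[measurable]: "(\<lambda>(x, \<omega>). D x \<omega>) \<in> borel_measurable (Data \<Otimes>\<^sub>M M)" and s: "0 < s"
    and event: "\<And>x. x \<in> space Data \<Longrightarrow> AE \<omega> in M. f x \<omega> \<in> S \<longrightarrow> s \<le> D x \<omega>"
    and bound: "(\<integral>\<^sup>+ \<omega>. (\<integral>\<^sup>+ x. ennreal (D x \<omega>) \<partial>Data) \<partial>M) \<le> ennreal B" and B: "0 \<le> B"
  shows "(\<integral>x. measure (distr M N (f x)) S \<partial>Data) \<le> B / s"
proof -
  interpret Data: prob_space Data by fact
  interpret M: prob_space M by fact
  interpret pair_sigma_finite Data M by unfold_locales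
  \<comment> \<open>\<open>x \<mapsto> measure (distr M N (f x)) S\<close> need not be measurable: it is only bounded by the
    measurable Markov majorant \<open>H\<close>, which \<open>integral_mono_AE'\<close> allows.\<close>
  define H where "H x = min 1 (ennreal (1 / s) * (\<integral>\<^sup>+ \<omega>. ennreal (D x \<omega>) \<partial>M))" for x
  have [measurable]: "H \<in> borel_measurable Data"
    unfolding H_def by measurable
  have H_le_1: "H x \<le> 1" for x by (simp add: H_def)
  then have H_finite: "H x < \<top>" for x by (rule le_less_trans) simp
  have "measure (distr M N (f x)) S \<le> enn2real (H x)" if x: "x \<in> space Data" for x
  proof -
    have "emeasure (distr M N (f x)) S \<le> 1"
      using emeasure_distr_le_preimage[of M N "f x" S] M.emeasure_le_1[of "f x -` S \<inter> space M"]
      by (rule order_trans)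
    moreover have "emeasure (distr M N (f x)) S \<le> ennreal (1 / s) * (\<integral>\<^sup>+ \<omega>. ennreal (D x \<omega>) \<partial>M)"
      using x s D event by (intro emeasure_distr_le_Markov) auto
    ultimately show ?thesis
      unfolding measure_def H_def using H_finite[of x] by (intro enn2real_mono) (auto simp: H_def)
  qed
  then have "(\<integral>x. measure (distr M N (f x)) S \<partial>Data) \<le> (\<integral>x. enn2real (H x) \<partial>Data)"
    using H_le_1 by (intro integral_mono_AE' Data.integrable_const_bound[where B=1])
      (auto intro!: enn2real_leI)
  also have "\<dots> = enn2real (\<integral>\<^sup>+ x. H x \<partial>Data)"
    using H_finite by (subst integral_eq_nn_integral) (auto intro!: nn_integral_cong)
  also have "\<dots> \<le> B / s"
  proof (rule enn2real_leI)
    have "(\<integral>\<^sup>+ x. H x \<partial>Data) \<le> (\<integral>\<^sup>+ x. ennreal (1 / s) * (\<integral>\<^sup>+ \<omega>. ennreal (D x \<omega>) \<partial>M) \<partial>Data)"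
      unfolding H_def by (intro nn_integral_mono) simp
    also have "\<dots> = ennreal (1 / s) * (\<integral>\<^sup>+ x. (\<integral>\<^sup>+ \<omega>. ennreal (D x \<omega>) \<partial>M) \<partial>Data)"
      by (rule nn_integral_cmult) measurable
    also have "\<dots> = ennreal (1 / s) * (\<integral>\<^sup>+ \<omega>. (\<integral>\<^sup>+ x. ennreal (D x \<omega>) \<partial>Data) \<partial>M)"
      by (subst Fubini') measurable
    also have "\<dots> \<le> ennreal (1 / s) * ennreal B"
      by (intro mult_left_mono bound) simp
    finally show "(\<integral>\<^sup>+ x. H x \<partial>Data) \<le> ennreal (B / s)"
      using s B by (simp add: ennreal_mult''[symmetric] del: ennreal_mult)
  qed (use s B in simp)
  finally show ?thesis .
qed

section \<open>The approximate posterior\<close>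

definition weights_and_prior_atoms :: "'a measure \<Rightarrow> real \<Rightarrow> nat \<Rightarrow> nat \<Rightarrow> ((nat \<Rightarrow> real) \<times> (nat \<Rightarrow> 'a)) measure"
  where "weights_and_prior_atoms F \<alpha> T n = dirichlet (n + T) (post_weights_param n T \<alpha>) \<Otimes>\<^sub>M PiM {..<T} (\<lambda>_. F)"

lemma approx_posterior_eq_distr:
  "approx_posterior X F \<alpha> T n x = distr (weights_and_prior_atoms F \<alpha> T n) (subprob_algebra X) (random_measure X n T x)"
  by (simp add: approx_posterior_def weights_and_prior_atoms_def)

context
  fixes F :: "'a measure" and \<alpha> :: real and T n :: nat
  assumes F: "prob_space F" and \<alpha>: "0 < \<alpha>" and T: "1 \<le> T"
begin

lemma prob_space_weights_and_prior_atoms: "prob_space (weights_and_prior_atoms F \<alpha> T n)"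
  unfolding weights_and_prior_atoms_def using F T \<alpha>
  by (intro prob_space_pair prob_space_PiM prob_space_dirichlet post_weights_param_pos) auto

lemma distr_weights_and_prior_atoms_fst:
  "distr (weights_and_prior_atoms F \<alpha> T n) (dirichlet (n + T) (post_weights_param n T \<alpha>)) fst
    = dirichlet (n + T) (post_weights_param n T \<alpha>)"
  unfolding weights_and_prior_atoms_def using F
  by (intro prob_space.distr_pair_fst prob_space_PiM) auto

lemma AE_weights_and_prior_atoms_simplex:
  "AE \<omega> in weights_and_prior_atoms F \<alpha> T n. (\<forall>a<n + T. 0 \<le> fst \<omega> a) \<and> (\<Sum>a<n + T. fst \<omega> a) = 1"
proof -
  have "AE w in distr (weights_and_prior_atoms F \<alpha> T n) (dirichlet (n + T) (post_weights_param n T \<alpha>)) fst.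
      (\<forall>a<n + T. 0 \<le> w a) \<and> (\<Sum>a<n + T. w a) = 1"
    unfolding distr_weights_and_prior_atoms_fst using T \<alpha>
    by (intro AE_dirichlet_simplex post_weights_param_pos) auto
  then show ?thesis
    by (rule AE_distrD[rotated]) (simp add: weights_and_prior_atoms_def)
qed

lemma nn_integral_weights_and_prior_atoms_fst:
  assumes f: "f \<in> borel_measurable (PiM {..<n + T} (\<lambda>_. borel))"
  shows "(\<integral>\<^sup>+ \<omega>. f (fst \<omega>) \<partial>weights_and_prior_atoms F \<alpha> T n)
    = (\<integral>\<^sup>+ w. f w \<partial>dirichlet (n + T) (post_weights_param n T \<alpha>))"
proof -
  have "(\<integral>\<^sup>+ w. f w \<partial>dirichlet (n + T) (post_weights_param n T \<alpha>))
      = (\<integral>\<^sup>+ w. f w \<partial>distr (weights_and_prior_atoms F \<alpha> T n) (dirichlet (n + T) (post_weights_param n T \<alpha>)) fst)"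
    by (simp add: distr_weights_and_prior_atoms_fst)
  also have "\<dots> = (\<integral>\<^sup>+ \<omega>. f (fst \<omega>) \<partial>weights_and_prior_atoms F \<alpha> T n)"
    using f by (intro nn_integral_distr)
      (auto simp: weights_and_prior_atoms_def dirichlet_def cong: measurable_cong_sets)
  finally show ?thesis ..
qed

end

context centred_reproducing_kernel
begin

lemma MMD2_gt_if_minimiser_excess:
  assumes P\<theta>: "\<forall>\<theta>\<in>\<Theta>. prob_space (P\<theta> \<theta>) \<and> sets (P\<theta> \<theta>) = sets X"
    and R: "prob_space R" "sets R = sets X"
    and \<theta>R: "\<theta>R \<in> \<Theta>" and minimal: "\<forall>\<theta>\<in>\<Theta>. MMD2 k R (P\<theta> \<theta>R) \<le> MMD2 k R (P\<theta> \<theta>)"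
    and r: "0 \<le> r" and excess: "(INF \<theta>\<in>\<Theta>. MMD k (P\<theta> \<theta>) P0) + r < MMD k (P\<theta> \<theta>R) P0"
  shows "(r / 2)\<^sup>2 < MMD2 k R P0"
proof -
  have "r / 2 < sqrt (MMD2 k R P0)"
    using MMD_minimiser_le[OF prob_space_P0 sets_P0 P\<theta> R \<theta>R minimal] excess by (simp add: MMD_def)
  then have "(r / 2)\<^sup>2 < (sqrt (MMD2 k R P0))\<^sup>2"
    using r by (intro power_strict_mono) auto
  then show ?thesis
    using MMD2_nonneg[OF R prob_space_P0 sets_P0] by simp
qed

lemma prior_atoms_in_space:
  assumes "sets F = sets X" and "\<omega> \<in> space (weights_and_prior_atoms F \<alpha> T n)" and "i < T"
  shows "snd \<omega> i \<in> space X"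
  using assms sets_eq_imp_space_eq[of F X]
  by (auto simp: weights_and_prior_atoms_def space_pair_measure space_PiM PiE_iff)

lemma measurable_posterior_quadratic_form:
  assumes F: "sets F = sets X"
  shows "(\<lambda>(x, \<omega>). centred_quadratic_form k P0 (n + T) (fst \<omega>) (append_points n x (snd \<omega>)))
    \<in> borel_measurable (PiM {..<n} (\<lambda>_. P0) \<Otimes>\<^sub>M weights_and_prior_atoms F \<alpha> T n)"
proof -
  have "(\<lambda>w. w a) \<in> borel_measurable (dirichlet (n + T) (post_weights_param n T \<alpha>))" if "a < n + T" for a
    using that by (simp add: dirichlet_def cong: measurable_cong_sets)
  moreover have "(\<lambda>x'. x' i) \<in> measurable (PiM {..<T} (\<lambda>_. F)) X" if "i < T" for i
    using that F by (simp cong: measurable_cong_sets)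
  moreover have "(\<lambda>x. x i) \<in> measurable (PiM {..<n} (\<lambda>_. P0)) X" if "i < n" for i
    using that by (intro measurable_component_P0) auto
  ultimately show ?thesis
    unfolding case_prod_beta weights_and_prior_atoms_def
    by (intro measurable_centred_quadratic_form measurable_append_points) auto
qed

lemma nn_integral_posterior_quadratic_form_le:
  assumes F: "prob_space F" "sets F = sets X" and \<alpha>: "0 < \<alpha>" and T: "1 \<le> T" and n: "1 \<le> n"
  shows "(\<integral>\<^sup>+ \<omega>. (\<integral>\<^sup>+ x. ennreal (centred_quadratic_form k P0 (n + T) (fst \<omega>) (append_points n x (snd \<omega>)))
      \<partial>PiM {..<n} (\<lambda>_. P0)) \<partial>weights_and_prior_atoms F \<alpha> T n)
    \<le> ennreal ((72 + 8 * \<alpha>) / real n)"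
proof -
  have "AE \<omega> in weights_and_prior_atoms F \<alpha> T n.
      (\<integral>\<^sup>+ x. ennreal (centred_quadratic_form k P0 (n + T) (fst \<omega>) (append_points n x (snd \<omega>)))
        \<partial>PiM {..<n} (\<lambda>_. P0)) \<le> ennreal (MMD2_weight_bound n T (fst \<omega>))"
    using AE_weights_and_prior_atoms_simplex[OF F(1) \<alpha> T, of n] AE_space
  proof eventually_elim
    case (elim \<omega>)
    then show ?case
      using prior_atoms_in_space[OF F(2)] by (intro nn_integral_centred_quadratic_form_le) auto
  qed
  then have "(\<integral>\<^sup>+ \<omega>. (\<integral>\<^sup>+ x. ennreal (centred_quadratic_form k P0 (n + T) (fst \<omega>) (append_points n x (snd \<omega>)))
      \<partial>PiM {..<n} (\<lambda>_. P0)) \<partial>weights_and_prior_atoms F \<alpha> T n)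
      \<le> (\<integral>\<^sup>+ \<omega>. ennreal (MMD2_weight_bound n T (fst \<omega>)) \<partial>weights_and_prior_atoms F \<alpha> T n)"
    by (rule nn_integral_mono_AE)
  also have "\<dots> = (\<integral>\<^sup>+ w. ennreal (MMD2_weight_bound n T w) \<partial>dirichlet (n + T) (post_weights_param n T \<alpha>))"
    using F \<alpha> T unfolding MMD2_weight_bound_def
    by (intro nn_integral_weights_and_prior_atoms_fst) measurable
  also have "\<dots> \<le> ennreal ((72 + 8 * \<alpha>) / real n)"
    using n T \<alpha> by (rule nn_integral_dirichlet_MMD2_weight_bound)
  finally show ?thesis .
qed

lemma quadratic_form_gt_if_posterior_excess:
  fixes \<Theta> :: "'p set" and P\<theta> :: "'p \<Rightarrow> 'a measure" and thetastar :: "'a measure \<Rightarrow> 'p"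
  assumes P\<theta>: "\<forall>\<theta>\<in>\<Theta>. prob_space (P\<theta> \<theta>) \<and> sets (P\<theta> \<theta>) = sets X"
    and thetastar_min: "\<forall>P. prob_space P \<and> sets P = sets X \<longrightarrow>
          thetastar P \<in> \<Theta> \<and> (\<forall>\<theta>\<in>\<Theta>. MMD2 k P (P\<theta> (thetastar P)) \<le> MMD2 k P (P\<theta> \<theta>))"
    and x: "\<And>i. i < n \<Longrightarrow> x i \<in> space X" and x': "\<And>i. i < T \<Longrightarrow> x' i \<in> space X"
    and w: "\<And>a. a < n + T \<Longrightarrow> 0 \<le> w a" and sum_w: "(\<Sum>a<n + T. w a) = 1"
    and r: "0 \<le> r"
    and excess: "(INF \<theta>\<in>\<Theta>. MMD k (P\<theta> \<theta>) P0) + r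
      < MMD k (P\<theta> (thetastar (random_measure X n T x (w, x')))) P0"
  shows "(r / 2)\<^sup>2 < centred_quadratic_form k P0 (n + T) w (append_points n x x')"
proof -
  let ?R = "weighted_point_measure X (n + T) w (append_points n x x')"
  have y: "\<And>a. a < n + T \<Longrightarrow> append_points n x x' a \<in> space X"
    using x x' by (intro append_points_in_space)
  have R: "prob_space ?R" "sets ?R = sets X"
    using y w sum_w by (auto intro: prob_space_weighted_point_measure)
  have "(r / 2)\<^sup>2 < MMD2 k ?R P0"
    using excess R thetastar_min r random_measure_eq_weighted_point_measure[OF x x', where w=w]
    by (intro MMD2_gt_if_minimiser_excess[OF P\<theta> R]) auto
  also have "\<dots> = centred_quadratic_form k P0 (n + T) w (append_points n x x')"
    using y w sum_w by (rule MMD2_weighted_point_measure)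
  finally show ?thesis .
qed

lemma AE_posterior_excess_imp_quadratic_form_ge:
  fixes \<Theta> :: "'p set" and P\<theta> :: "'p \<Rightarrow> 'a measure" and thetastar :: "'a measure \<Rightarrow> 'p"
  assumes P\<theta>: "\<forall>\<theta>\<in>\<Theta>. prob_space (P\<theta> \<theta>) \<and> sets (P\<theta> \<theta>) = sets X"
    and C: "(INF \<theta>\<in>\<Theta>. MMD k (P\<theta> \<theta>) P0) = C"
    and \<alpha>: "0 < \<alpha>" and T: "1 \<le> T" and F: "prob_space F" "sets F = sets X"
    and thetastar_min: "\<forall>P. prob_space P \<and> sets P = sets X \<longrightarrow>
          thetastar P \<in> \<Theta> \<and> (\<forall>\<theta>\<in>\<Theta>. MMD2 k P (P\<theta> (thetastar P)) \<le> MMD2 k P (P\<theta> \<theta>))"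
    and m: "0 < m" and x: "x \<in> space (PiM {..<n} (\<lambda>_. P0))"
  shows "AE \<omega> in weights_and_prior_atoms F \<alpha> T n.
      random_measure X n T x \<omega> \<in> {P \<in> space (subprob_algebra X). MMD k (P\<theta> (thetastar P)) P0 > C + m / sqrt (real n)}
      \<longrightarrow> m\<^sup>2 / (4 * real n) \<le> centred_quadratic_form k P0 (n + T) (fst \<omega>) (append_points n x (snd \<omega>))"
  using AE_weights_and_prior_atoms_simplex[OF F(1) \<alpha> T, of n] AE_space
proof eventually_elim
  case (elim \<omega>)
  show ?case
  proof
    assume "random_measure X n T x \<omega>
      \<in> {P \<in> space (subprob_algebra X). MMD k (P\<theta> (thetastar P)) P0 > C + m / sqrt (real n)}"
    then have "(INF \<theta>\<in>\<Theta>. MMD k (P\<theta> \<theta>) P0) + m / sqrt (real n)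
        < MMD k (P\<theta> (thetastar (random_measure X n T x (fst \<omega>, snd \<omega>)))) P0"
      using C by simp
    moreover have "\<And>i. i < n \<Longrightarrow> x i \<in> space X"
      using x space_P0 by (auto simp: space_PiM PiE_iff)
    ultimately have "(m / sqrt (real n) / 2)\<^sup>2
        < centred_quadratic_form k P0 (n + T) (fst \<omega>) (append_points n x (snd \<omega>))"
      using elim prior_atoms_in_space[OF F(2)] m
      by (intro quadratic_form_gt_if_posterior_excess[OF P\<theta> thetastar_min]) auto
    then show "m\<^sup>2 / (4 * real n)
        \<le> centred_quadratic_form k P0 (n + T) (fst \<omega>) (append_points n x (snd \<omega>))"
      by (simp add: power_divide)
  qed
qed

lemma expected_posterior_excess_le:
  fixes \<Theta> :: "'p set" and P\<theta> :: "'p \<Rightarrow> 'a measure" and thetastar :: "'a measure \<Rightarrow> 'p"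
  assumes P\<theta>: "\<forall>\<theta>\<in>\<Theta>. prob_space (P\<theta> \<theta>) \<and> sets (P\<theta> \<theta>) = sets X"
    and C: "(INF \<theta>\<in>\<Theta>. MMD k (P\<theta> \<theta>) P0) = C"
    and \<alpha>: "0 < \<alpha>" and T: "1 \<le> T" and F: "prob_space F" "sets F = sets X"
    and thetastar_min: "\<forall>P. prob_space P \<and> sets P = sets X \<longrightarrow>
          thetastar P \<in> \<Theta> \<and> (\<forall>\<theta>\<in>\<Theta>. MMD2 k P (P\<theta> (thetastar P)) \<le> MMD2 k P (P\<theta> \<theta>))"
    and n: "1 \<le> n" and m: "0 < m"
  shows "(\<integral>x. measure (approx_posterior X F \<alpha> T n x)
            {P \<in> space (subprob_algebra X). MMD k (P\<theta> (thetastar P)) P0 > C + m / sqrt (real n)}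
          \<partial>PiM {..<n} (\<lambda>_. P0))
    \<le> 4 * (72 + 8 * \<alpha>) / m\<^sup>2"
proof -
  have "(\<integral>x. measure (approx_posterior X F \<alpha> T n x)
        {P \<in> space (subprob_algebra X). MMD k (P\<theta> (thetastar P)) P0 > C + m / sqrt (real n)}
      \<partial>PiM {..<n} (\<lambda>_. P0)) \<le> (72 + 8 * \<alpha>) / real n / (m\<^sup>2 / (4 * real n))"
    unfolding approx_posterior_eq_distr
  proof (rule integral_measure_distr_le_Markov[OF _ _ measurable_posterior_quadratic_form[OF F(2)]
        _ AE_posterior_excess_imp_quadratic_form_ge[OF P\<theta> C \<alpha> T F thetastar_min m]
        nn_integral_posterior_quadratic_form_le[OF F \<alpha> T n]])
    show "prob_space (PiM {..<n} (\<lambda>_. P0))"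
      using prob_space_P0 by (intro prob_space_PiM) auto
    show "prob_space (weights_and_prior_atoms F \<alpha> T n)"
      using F(1) \<alpha> T by (rule prob_space_weights_and_prior_atoms)
  qed (use n m \<alpha> in auto)
  also have "\<dots> = 4 * (72 + 8 * \<alpha>) / m\<^sup>2"
    using n m by (simp add: field_simps)
  finally show ?thesis .
qed

end

theorem theorem2:
  fixes X :: "'a measure" and k :: "'a \<Rightarrow> 'a \<Rightarrow> real"
    and \<Theta> :: "'p set" and P\<theta> :: "'p \<Rightarrow> 'a measure"
    and P0 F :: "'a measure" and C \<alpha> :: real and T :: nat
    and thetastar :: "'a measure \<Rightarrow> 'p" and M :: "nat \<Rightarrow> real"
  assumes kernel: "reproducing_kernel X k"
    and k_meas: "(\<lambda>(x, y). k x y) \<in> borel_measurable (X \<Otimes>\<^sub>M X)"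
    and k_bdd: "\<forall>x\<in>space X. \<forall>y\<in>space X. \<bar>k x y\<bar> \<le> 1"
    and P\<theta>_prob: "\<forall>\<theta>\<in>\<Theta>. prob_space (P\<theta> \<theta>) \<and> sets (P\<theta> \<theta>) = sets X"
    and P0_prob: "prob_space P0" "sets P0 = sets X"
    and C_def: "(INF \<theta>\<in>\<Theta>. MMD k (P\<theta> \<theta>) P0) = C" and C_pos: "C > 0"
    and \<alpha>_pos: "\<alpha> > 0" and T_pos: "T \<ge> 1"
    and F_prob: "prob_space F" "sets F = sets X"
    and thetastar_min: "\<forall>P. prob_space P \<and> sets P = sets X \<longrightarrow>
          thetastar P \<in> \<Theta> \<and> (\<forall>\<theta>\<in>\<Theta>. MMD2 k P (P\<theta> (thetastar P)) \<le> MMD2 k P (P\<theta> \<theta>))"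
    and thetastar_meas: "(\<lambda>P. MMD k (P\<theta> (thetastar P)) P0) \<in> borel_measurable (subprob_algebra X)"
    and M_pos: "\<forall>n. M n > 0"
    and M_lim: "filterlim M at_top sequentially"
  shows "(\<lambda>n. \<integral>x. measure (approx_posterior X F \<alpha> T n x)
                 {P \<in> space (subprob_algebra X). MMD k (P\<theta> (thetastar P)) P0 > C + M n / sqrt (real n)}
              \<partial>(PiM {..<n} (\<lambda>_. P0)))
         \<longlonglongrightarrow> 0"
proof -
  interpret centred_reproducing_kernel X k P0
    using kernel k_meas k_bdd P0_prob
    by (simp add: centred_reproducing_kernel_def centred_reproducing_kernel_axioms_def
        bounded_reproducing_kernel_def)
  let ?a = "\<lambda>n. \<integral>x. measure (approx_posterior X F \<alpha> T n x)
      {P \<in> space (subprob_algebra X). MMD k (P\<theta> (thetastar P)) P0 > C + M n / sqrt (real n)}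
    \<partial>(PiM {..<n} (\<lambda>_. P0))"
  have upper: "?a n \<le> 4 * (72 + 8 * \<alpha>) / (M n)\<^sup>2" if "1 \<le> n" for n
    using that M_pos
    by (intro expected_posterior_excess_le[OF P\<theta>_prob C_def \<alpha>_pos T_pos F_prob thetastar_min]) auto
  have lower: "0 \<le> ?a n" for n
    by (intro Bochner_Integration.integral_nonneg) simp
  have bound_to_0: "(\<lambda>n. 4 * (72 + 8 * \<alpha>) / (M n)\<^sup>2) \<longlonglongrightarrow> 0"
    by (intro tendsto_divide_0[OF tendsto_const] filterlim_at_top_imp_at_infinity
        filterlim_pow_at_top M_lim) simp
  show ?thesis
  proof (rule tendsto_sandwich[OF _ _ tendsto_const bound_to_0])
    show "\<forall>\<^sub>F n in sequentially. 0 \<le> ?a n" using lower by simp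
    show "\<forall>\<^sub>F n in sequentially. ?a n \<le> 4 * (72 + 8 * \<alpha>) / (M n)\<^sup>2"
      using upper by (intro eventually_sequentiallyI[of 1]) auto
  qed
qed

end
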